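(* Let $k\geq 2$ be a fixed integer. There are constants $c_1,c_2>0$ depending only on $k$ such that the following holds. Let $G=(A\cup B,E)$ be a bipartite graph with parts $A$ and $B$, where $a=|A|\geq b=|B|$, let $m=|E|$, and let $t$ be the number of copies of $C_{2k}$ in $G$. If $m \geq c_1\, a\, b^{1/k}$, then $t \geq c_2\, \dfrac{m^{2k}}{a^k b^k}$.
   Context: $C_{2k}$ denotes the cycle on $2k$ vertices; a copy of $C_{2k}$ in $G$ is a subgraph of $G$ isomorphic to $C_{2k}$. *)

theory Defs
  imports Complex_Main
begin

definition bipartite_graph :: "'a set \<Rightarrow> 'a set \<Rightarrow> 'a set set \<Rightarrow> bool" where
  "bipartite_graph A B E \<longleftrightarrow> finite A \<and> finite B \<and> A \<inter> B = {} \<and>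
     (\<forall>e\<in>E. \<exists>x\<in>A. \<exists>y\<in>B. e = {x, y})"

definition cycle_edges :: "nat \<Rightarrow> (nat \<Rightarrow> 'a) \<Rightarrow> 'a set set" where
  "cycle_edges n f = {{f i, f ((i + 1) mod n)} | i. i < n}"

text \<open>Copies of C_n in a graph with edge set E: subgraphs isomorphic to the cycle C_n.
  A copy of a cycle has no isolated vertices, so it is determined by its edge set;
  we count these edge sets.\<close>
definition cycle_copies :: "nat \<Rightarrow> 'a set set \<Rightarrow> 'a set set set" where
  "cycle_copies n E = {H. H \<subseteq> E \<and> (\<exists>f. inj_on f {..<n} \<and> H = cycle_edges n f)}"

end

theory Submission
  imports Defs "HOL-Library.FuncSet" "HOL-Analysis.Convex"
begin

text \<open>Let \<open>W\<^sub>n(x,y)\<close> count walks of length \<open>n\<close>. By Cauchy--Schwarz, \<open>j \<mapsto> W\<^sub>2\<^sub>j(x,x)\<close> and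
  the number \<open>S\<^sub>j\<close> of walks of length \<open>2j\<close> between vertices of \<open>A\<close> are log-convex; since
  \<open>S\<^sub>0 = |A|\<close> and \<open>S\<^sub>1 \<ge> m\<^sup>2/|B|\<close>, at least \<open>m\<^sup>2\<^sup>k/(|A|\<^sup>k|B|\<^sup>k)\<close> closed walks of length \<open>2k\<close>
  start in \<open>A\<close>. A closed walk that is not a cycle revisits a vertex and splits into closed walks of
  lengths \<open>r\<close> and \<open>2k - r\<close>; log-convexity at that vertex bounds their product by
  \<open>\<mu>^(k\<^sup>2) deg(x)\<^sup>k + W\<^sub>2\<^sub>k(x,x)/\<mu>\<close>. So if all degrees are within a constant factor of the
  average, at least half of the closed walks are cycles, and each copy of \<open>C\<^sub>2\<^sub>k\<close> is traversed
  by at most \<open>(2k)\<^sup>2\<^sup>k\<close> of them. Bounded degrees are reached by induction on \<open>|A| + |B|\<close>: if the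
  vertices of degree above \<open>9\<^sup>k\<close> times the average on one side meet a third of the edges, they
  span a graph that is at least as dense but has far fewer vertices; otherwise their edges are
  discarded.\<close>

section \<open>Log-convex sequences\<close>

definition log_convex_upto :: "nat \<Rightarrow> (nat \<Rightarrow> real) \<Rightarrow> bool" where
  "log_convex_upto k s \<longleftrightarrow> (\<forall>j. Suc j < k \<longrightarrow> (s (Suc j))\<^sup>2 \<le> s j * s (Suc (Suc j)))"

lemma log_convex_uptoD:
  "log_convex_upto k s \<Longrightarrow> Suc j < k \<Longrightarrow> (s (Suc j))\<^sup>2 \<le> s j * s (Suc (Suc j))"
  unfolding log_convex_upto_def by blast

lemma log_convex_upto_pos:
  assumes lc: "log_convex_upto k s" and s0: "s 0 > 0" and s1: "s 1 > 0"
  shows "j \<le> k \<Longrightarrow> s j > 0"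
proof (induction j rule: less_induct)
  case (less j)
  consider "j = 0" | "j = 1" | i where "j = Suc (Suc i)"
    by (metis One_nat_def not0_implies_Suc)
  then show ?case
  proof cases
    case 3
    have "s i > 0" "s (Suc i) > 0" using less 3 by simp_all
    hence "0 < (s (Suc i))\<^sup>2" by simp
    also have "\<dots> \<le> s i * s j" using log_convex_uptoD[OF lc, of i] less.prems 3 by simp
    finally show ?thesis
      using \<open>s i > 0\<close> 3 by (simp add: zero_less_mult_iff)
  qed (use s0 s1 in auto)
qed

lemma log_convex_upto_ratio_mono:
  assumes lc: "log_convex_upto k s" and pos: "\<And>j. j \<le> k \<Longrightarrow> s j > 0"
    and "a \<le> b" "b < k"
  shows "s (Suc a) / s a \<le> s (Suc b) / s b"
proof (rule lift_Suc_mono_le_ivl[where N = "{j. Suc j < k}"])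
  fix j assume "j \<in> {j. Suc j < k}"
  hence "s (Suc j) * s (Suc j) \<le> s j * s (Suc (Suc j))" and "s j > 0" "s (Suc j) > 0"
    using log_convex_uptoD[OF lc] pos by (auto simp: power2_eq_square)
  thus "s (Suc j) / s j \<le> s (Suc (Suc j)) / s (Suc j)"
    by (simp add: divide_simps mult.commute)
qed (use assms in auto)

lemma log_convex_upto_geometric_lower:
  assumes lc: "log_convex_upto k s" and s0: "s 0 > 0" and s1: "s 1 > 0"
  shows "j \<le> k \<Longrightarrow> s 0 * (s 1 / s 0) ^ j \<le> s j"
proof (induction j)
  case (Suc j)
  have pos: "\<And>i. i \<le> k \<Longrightarrow> s i > 0" using log_convex_upto_pos[OF lc s0 s1] by blast
  have "s 1 / s 0 \<le> s (Suc j) / s j"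
    using log_convex_upto_ratio_mono[OF lc pos, of 0 j] Suc.prems by simp
  hence "(s 1 / s 0) * (s 0 * (s 1 / s 0) ^ j) \<le> (s (Suc j) / s j) * s j"
    using Suc s0 s1 pos[of j] pos[of "Suc j"] by (intro mult_mono) auto
  thus ?case using pos[of j] Suc.prems by (simp add: mult.left_commute)
qed simp

lemma log_convex_upto_product_le_geometric:
  fixes s :: "nat \<Rightarrow> real"
  assumes pos: "\<And>j. j \<le> k \<Longrightarrow> s j > 0" and s0: "s 0 = 1" and mu: "\<mu> \<ge> 1"
    and slow: "\<And>j. Suc j < k \<Longrightarrow> s (Suc (Suc j)) / s (Suc j) \<le> \<mu> * (s (Suc j) / s j)"
    and pq: "p + q = k"
  shows "s p * s q \<le> \<mu>^(k*k) * (s 1)^k"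
proof -
  define r where "r j = s (Suc j) / s j" for j
  have r_pos: "r j > 0" if "j < k" for j
    using pos[of j] pos[of "Suc j"] that by (simp add: r_def divide_pos_pos)
  have r_le: "r j \<le> \<mu>^j * r 0" if "j < k" for j
    using that
  proof (induction j)
    case (Suc j)
    have "r (Suc j) \<le> \<mu> * r j" using slow Suc.prems by (simp add: r_def)
    also have "\<dots> \<le> \<mu> * (\<mu>^j * r 0)" using Suc mu by simp
    finally show ?case by simp
  qed simp
  have s_le: "s j \<le> (\<mu>^k * r 0)^j" if "j \<le> k" for j
    using that
  proof (induction j)
    case (Suc j)
    have "\<mu>^j * r 0 \<le> \<mu>^k * r 0"
      using power_increasing[of j k \<mu>] Suc.prems mu r_pos[of 0] by (simp add: mult_right_mono)
    hence "r j \<le> \<mu>^k * r 0" using r_le[of j] Suc.prems by simp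
    moreover have "s j \<le> (\<mu>^k * r 0)^j" "0 \<le> s j" using Suc pos[of j] by simp_all
    ultimately have "r j * s j \<le> (\<mu>^k * r 0) * (\<mu>^k * r 0)^j"
      using mu r_pos[of 0] Suc.prems by (intro mult_mono) simp_all
    moreover have "s (Suc j) = r j * s j" using pos[of j] Suc.prems by (simp add: r_def)
    ultimately show ?case by simp
  qed (simp add: s0)
  have "s p * s q \<le> (\<mu>^k * r 0)^p * (\<mu>^k * r 0)^q"
    using s_le[of p] s_le[of q] pq pos[of p] pos[of q] by (intro mult_mono) auto
  also have "\<dots> = (\<mu>^k * r 0)^k" by (metis power_add pq)
  also have "\<dots> = \<mu>^(k*k) * (s 1)^k" by (simp add: r_def s0 power_mult_distrib power_mult)
  finally show ?thesis .
qed

lemma log_convex_upto_shift_ratio_mono: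
  assumes lc: "log_convex_upto k s" and pos: "\<And>j. j \<le> k \<Longrightarrow> s j > 0"
    and "i \<le> i'" "q + i' \<le> k"
  shows "s (q + i) / s i \<le> s (q + i') / s i'"
proof (rule lift_Suc_mono_le_ivl[where f = "\<lambda>i. s (q + i) / s i" and N = "{i. q + i < k}"])
  fix n assume n: "n \<in> {i. q + i < k}"
  hence "s (Suc n) / s n \<le> s (Suc (q + n)) / s (q + n)"
    using log_convex_upto_ratio_mono[OF lc pos, of n "q + n"] by simp
  moreover have "s n > 0" "s (Suc n) > 0" "s (q + n) > 0" using pos n by auto
  ultimately show "s (q + n) / s n \<le> s (q + Suc n) / s (Suc n)" by (simp add: field_simps)
qed (use assms in auto)

text \<open>The jump of the ratios is picked up by \<open>s (q + i) / s i\<close> on the way from \<open>i = 0\<close> to \<open>i = p\<close>.\<close>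
lemma log_convex_upto_product_le_jump:
  assumes lc: "log_convex_upto k s" and pos: "\<And>j. j \<le> k \<Longrightarrow> s j > 0" and mu: "\<mu> \<ge> 0"
    and jump: "Suc j < k" "\<mu> * (s (Suc j) / s j) < s (Suc (Suc j)) / s (Suc j)"
    and pq: "p + q = k" "1 \<le> p" "1 \<le> q"
  shows "\<mu> * (s p * s q) \<le> s 0 * s k"
proof -
  define r where "r j = s (Suc j) / s j" for j
  define g where "g i = s (q + i) / s i" for i
  have r_mono: "r a \<le> r b" if "a \<le> b" "b < k" for a b
    using log_convex_upto_ratio_mono[OF lc pos that] by (simp add: r_def)
  have r_pos: "r i > 0" if "i < k" for i
    using pos[of i] pos[of "Suc i"] that by (simp add: r_def divide_pos_pos)
  have g_pos: "g i > 0" if "i \<le> p" for i using pos[of i] pos[of "q+i"] that pq by (simp add: g_def)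
  have g_Suc: "g (Suc i) = g i * (r (q + i) / r i)" if "i < p" for i
    using that pq pos[of i] pos[of "q+i"] pos[of "Suc i"] pos[of "Suc (q+i)"]
    by (simp add: g_def r_def)
  have g_mono: "g i \<le> g i'" if "i \<le> i'" "i' \<le> p" for i i'
    using log_convex_upto_shift_ratio_mono[OF lc pos that(1)] that pq by (simp add: g_def)
  define i where "i = min (p - 1) j"
  have i: "i < p" "i \<le> j" "Suc j \<le> q + i" using jump pq by (auto simp: i_def)
  have "\<mu> * r i \<le> \<mu> * r j" using r_mono[of i j] i jump mu by (simp add: mult_left_mono)
  also have "\<dots> < r (Suc j)" using jump by (simp add: r_def)
  also have "\<dots> \<le> r (q + i)" using r_mono[of "Suc j" "q + i"] i pq by simp
  finally have "\<mu> \<le> r (q + i) / r i" using r_pos[of i] i pq by (simp add: le_divide_eq)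
  hence "g i * \<mu> \<le> g i * (r (q + i) / r i)" using g_pos[of i] i by (intro mult_left_mono) auto
  hence "g i * \<mu> \<le> g (Suc i)" using g_Suc[of i] i by simp
  moreover have "g 0 \<le> g i" "g (Suc i) \<le> g p"
    using g_mono[of 0 i] g_mono[of "Suc i" p] i by simp_all
  moreover have "g 0 * \<mu> \<le> g i * \<mu>" using \<open>g 0 \<le> g i\<close> mu by (rule mult_right_mono)
  ultimately have "g 0 * \<mu> \<le> g p" by linarith
  moreover have "g 0 = s q / s 0" "g p = s k / s p"
    using pq(1) by (simp_all add: g_def add.commute[of q p])
  moreover have "s 0 > 0" "s p > 0" using pos pq by auto
  ultimately show ?thesis by (simp add: field_simps)
qed

lemma log_convex_upto_product_le:
  assumes lc: "log_convex_upto k s" and pos: "\<And>j. j \<le> k \<Longrightarrow> s j > 0" and s0: "s 0 = 1"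
    and mu: "\<mu> \<ge> 1" and pq: "p + q = k" "1 \<le> p" "1 \<le> q"
  shows "s p * s q \<le> \<mu>^(k*k) * (s 1)^k + s k / \<mu>"
proof -
  have nonneg: "0 \<le> \<mu>^(k*k) * (s 1)^k" "0 \<le> s k / \<mu>" using pos[of 1] pos[of k] mu pq by auto
  show ?thesis
  proof (cases "\<forall>j. Suc j < k \<longrightarrow> s (Suc (Suc j)) / s (Suc j) \<le> \<mu> * (s (Suc j) / s j)")
    case True
    hence "s p * s q \<le> \<mu>^(k*k) * (s 1)^k"
      using log_convex_upto_product_le_geometric[of k s \<mu> p q] pos s0 mu pq by blast
    thus ?thesis using nonneg(2) by linarith
  next
    case False
    then obtain j where "Suc j < k" "\<mu> * (s (Suc j) / s j) < s (Suc (Suc j)) / s (Suc j)"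
      by auto
    from log_convex_upto_product_le_jump[OF lc pos _ this pq] mu s0
    have "s p * s q \<le> s k / \<mu>" by (simp add: field_simps)
    thus ?thesis using nonneg(1) by linarith
  qed
qed

section \<open>Walks\<close>

definition walks :: "'a set set \<Rightarrow> 'a set \<Rightarrow> nat \<Rightarrow> 'a \<Rightarrow> 'a \<Rightarrow> (nat \<Rightarrow> 'a) set" where
  "walks E V n u v =
     {f \<in> {..n} \<rightarrow>\<^sub>E V. f 0 = u \<and> f n = v \<and> (\<forall>i<n. {f i, f (Suc i)} \<in> E)}"

definition walk_count :: "'a set set \<Rightarrow> 'a set \<Rightarrow> nat \<Rightarrow> 'a \<Rightarrow> 'a \<Rightarrow> real" where
  "walk_count E V n u v = real (card (walks E V n u v))"

definition adj :: "'a set set \<Rightarrow> 'a \<Rightarrow> 'a \<Rightarrow> real" where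
  "adj E x y = (if {x, y} \<in> E then 1 else 0)"

definition degree :: "'a set set \<Rightarrow> 'a set \<Rightarrow> 'a \<Rightarrow> real" where
  "degree E V x = (\<Sum>y\<in>V. adj E x y)"

lemma walk_vertex: "f \<in> walks E V n u v \<Longrightarrow> i \<le> n \<Longrightarrow> f i \<in> V"
  unfolding walks_def by auto

lemma walk_endpoint: "f \<in> walks E V n u v \<Longrightarrow> f n = v"
  unfolding walks_def by auto

lemma walks_eq_empty: "u \<notin> V \<or> v \<notin> V \<Longrightarrow> walks E V n u v = {}"
  unfolding walks_def by auto

lemma walk_count_eq_0: "u \<notin> V \<or> v \<notin> V \<Longrightarrow> walk_count E V n u v = 0"
  by (simp add: walk_count_def walks_eq_empty)

lemma walk_count_nonneg: "walk_count E V n u v \<ge> 0"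
  by (simp add: walk_count_def)

lemma walk_count_0: "walk_count E V 0 u v = (if u = v \<and> u \<in> V then 1 else 0)"
proof (cases "u = v \<and> u \<in> V")
  case True
  hence "walks E V 0 u v = {\<lambda>i. if i = 0 then u else undefined}"
    unfolding walks_def by (auto simp: PiE_def extensional_def)
  with True show ?thesis by (auto simp: walk_count_def)
next
  case False
  hence "walks E V 0 u v = {}" unfolding walks_def by auto
  thus ?thesis using False by (simp add: walk_count_def)
qed

lemma adj_commute: "adj E x y = adj E y x"
  by (simp add: adj_def insert_commute)

lemma degree_nonneg: "degree E V x \<ge> 0"
  unfolding degree_def adj_def by (simp add: sum_nonneg)

locale finite_graph =
  fixes E :: "'a set set" and V :: "'a set"
  assumes finite_vertices: "finite V" and edge_subset: "e \<in> E \<Longrightarrow> e \<subseteq> V"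
begin

lemma finite_edges: "finite E"
  by (rule finite_subset[of _ "Pow V"]) (use edge_subset finite_vertices in auto)

lemma finite_walks: "finite (walks E V n u v)"
  unfolding walks_def using finite_vertices
  by (intro finite_subset[OF _ finite_PiE[of "{..n}" "\<lambda>_. V"]]) auto

lemma walks_Suc:
  "walks E V (Suc n) u v = (\<Union>w\<in>{w\<in>V. {w, v} \<in> E}. (\<lambda>g. g(Suc n := v)) ` walks E V n u w)"
proof (intro equalityI subsetI)
  fix f assume f: "f \<in> walks E V (Suc n) u v"
  define g where "g = restrict f {..n}"
  have "g \<in> walks E V n u (f n)" and "f n \<in> V" "{f n, v} \<in> E"
    using f unfolding walks_def g_def by auto
  moreover have "f = g(Suc n := v)"
    using f unfolding walks_def g_def by (auto simp: PiE_def extensional_def le_Suc_eq)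
  ultimately show "f \<in> (\<Union>w\<in>{w\<in>V. {w, v} \<in> E}. (\<lambda>g. g(Suc n := v)) ` walks E V n u w)"
    by blast
next
  fix f assume "f \<in> (\<Union>w\<in>{w\<in>V. {w, v} \<in> E}. (\<lambda>g. g(Suc n := v)) ` walks E V n u w)"
  then obtain w g where w: "w \<in> V" "{w, v} \<in> E" and g: "g \<in> walks E V n u w"
    and f: "f = g(Suc n := v)" by blast
  have "v \<in> V" using edge_subset[OF w(2)] by simp
  with g have "f \<in> {..Suc n} \<rightarrow>\<^sub>E V"
    unfolding f walks_def by (auto simp: PiE_iff extensional_def le_Suc_eq)
  moreover have "\<forall>i<Suc n. {f i, f (Suc i)} \<in> E"
    using g w unfolding f walks_def by (auto simp: less_Suc_eq)
  ultimately show "f \<in> walks E V (Suc n) u v"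
    using g unfolding f walks_def by simp
qed

lemma card_walks_Suc_filter:
  "real (card {f \<in> walks E V (Suc n) u v. P (restrict f {..n})}) =
     (\<Sum>w\<in>V. real (card {g \<in> walks E V n u w. P g}) * adj E w v)"
proof -
  define extend where "extend g = g(Suc n := v)" for g :: "nat \<Rightarrow> 'a"
  define S where "S w = {g \<in> walks E V n u w. P g}" for w
  define N where "N = {w\<in>V. {w, v} \<in> E}"
  have restrict_ext: "restrict (extend g) {..n} = g" if "g \<in> walks E V n u w" for g w
    using that unfolding extend_def walks_def by (auto simp: PiE_def extensional_def)
  have "{f \<in> extend ` walks E V n u w. P (restrict f {..n})} = extend ` S w" for w
    unfolding S_def using restrict_ext by auto
  hence eq: "{f \<in> walks E V (Suc n) u v. P (restrict f {..n})} = (\<Union>w\<in>N. extend ` S w)"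
    unfolding walks_Suc N_def extend_def[symmetric] by blast
  have inj: "inj_on extend (S w)" for w
    by (rule inj_on_inverseI[of _ "\<lambda>f. restrict f {..n}"]) (auto simp: S_def restrict_ext)
  have endpoint: "extend g n = w" if "g \<in> S w" for g w
    using that walk_endpoint unfolding S_def extend_def by auto
  have disj: "extend ` S w \<inter> extend ` S w' = {}" if "w \<noteq> w'" for w w'
  proof -
    have "extend g \<noteq> extend h" if "g \<in> S w" "h \<in> S w'" for g h
      using endpoint[OF that(1)] endpoint[OF that(2)] \<open>w \<noteq> w'\<close> by auto
    thus ?thesis by blast
  qed
  have fin: "finite N" "finite (S w)" for w
    unfolding N_def S_def using finite_vertices finite_walks by simp_all
  have "card (\<Union>w\<in>N. extend ` S w) = (\<Sum>w\<in>N. card (extend ` S w))"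
    by (rule card_UN_disjoint) (use fin disj in auto)
  also have "\<dots> = (\<Sum>w\<in>N. card (S w))" by (intro sum.cong refl card_image inj)
  finally have "real (card {f \<in> walks E V (Suc n) u v. P (restrict f {..n})}) = (\<Sum>w\<in>N. real (card (S w)))"
    unfolding eq by simp
  also have "\<dots> = (\<Sum>w\<in>V. real (card (S w)) * adj E w v)"
    unfolding N_def adj_def using finite_vertices
    by (simp add: sum.inter_filter[symmetric] if_distrib cong: if_cong)
  finally show ?thesis unfolding S_def .
qed

lemma walk_count_Suc: "walk_count E V (Suc n) u v = (\<Sum>w\<in>V. walk_count E V n u w * adj E w v)"
  using card_walks_Suc_filter[of n u v "\<lambda>_. True"] by (simp add: walk_count_def)

lemma card_walks_prefix:
  "j \<le> n \<Longrightarrow> real (card {f \<in> walks E V n u v. P (restrict f {..j})}) =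
     (\<Sum>w\<in>V. real (card {g \<in> walks E V j u w. P g}) * walk_count E V (n - j) w v)"
proof (induction n arbitrary: v rule: dec_induct)
  case base
  have eq: "{f \<in> walks E V j u v. P (restrict f {..j})} = {g \<in> walks E V j u v. P g}"
    unfolding walks_def by (auto simp: PiE_restrict)
  have "(\<Sum>w\<in>V. c w * walk_count E V 0 w v) = (\<Sum>w\<in>V. if w = v then c w else 0)" for c
    by (intro sum.cong refl) (simp add: walk_count_0)
  also have "(\<Sum>w\<in>V. if w = v then c w else 0) = (if v \<in> V then c v else 0)" for c :: "'a \<Rightarrow> real"
    using finite_vertices by (simp add: sum.delta)
  finally have "(\<Sum>w\<in>V. c w * walk_count E V 0 w v) = (if v \<in> V then c v else 0)" for c .
  then show ?case unfolding eq by (simp add: walks_eq_empty)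
next
  case (step n)
  have "restrict (restrict f {..n}) {..j} = restrict f {..j}" for f :: "nat \<Rightarrow> 'a"
    using step.hyps(1) by auto
  hence "real (card {f \<in> walks E V (Suc n) u v. P (restrict f {..j})}) =
      (\<Sum>w'\<in>V. real (card {g \<in> walks E V n u w'. P (restrict g {..j})}) * adj E w' v)"
    using card_walks_Suc_filter[of n u v "\<lambda>g. P (restrict g {..j})"] by simp
  also have "\<dots> = (\<Sum>w'\<in>V. \<Sum>w\<in>V.
      real (card {g \<in> walks E V j u w. P g}) * walk_count E V (n - j) w w' * adj E w' v)"
    by (simp add: step.IH sum_distrib_right)
  also have "\<dots> = (\<Sum>w\<in>V. real (card {g \<in> walks E V j u w. P g}) *
      (\<Sum>w'\<in>V. walk_count E V (n - j) w w' * adj E w' v))"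
    by (subst sum.swap) (simp add: sum_distrib_left mult.assoc)
  also have "\<dots> = (\<Sum>w\<in>V. real (card {g \<in> walks E V j u w. P g}) * walk_count E V (Suc n - j) w v)"
    using step.hyps(1) by (simp add: walk_count_Suc Suc_diff_le)
  finally show ?case .
qed

lemma card_walks_through:
  assumes "i \<le> n"
  shows "real (card {f \<in> walks E V n u v. f i = x}) = walk_count E V i u x * walk_count E V (n - i) x v"
proof -
  have "real (card {f \<in> walks E V n u v. f i = x}) =
      (\<Sum>w\<in>V. real (card {g \<in> walks E V i u w. g i = x}) * walk_count E V (n - i) w v)"
    using card_walks_prefix[OF assms, of u v "\<lambda>g. g i = x"] by simp
  also have "\<dots> = (\<Sum>w\<in>V. if w = x then walk_count E V i u x * walk_count E V (n - i) x v else 0)"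
  proof (intro sum.cong refl)
    fix w
    have "{g \<in> walks E V i u w. g i = x} = (if w = x then walks E V i u x else {})"
      unfolding walks_def by auto
    thus "real (card {g \<in> walks E V i u w. g i = x}) * walk_count E V (n - i) w v =
        (if w = x then walk_count E V i u x * walk_count E V (n - i) x v else 0)"
      by (simp add: walk_count_def)
  qed
  also have "\<dots> = walk_count E V i u x * walk_count E V (n - i) x v"
    using finite_vertices walk_count_eq_0[of u V x E i] by (simp add: sum.delta)
  finally show ?thesis .
qed

lemma card_walks_through2:
  assumes "i \<le> j" "j \<le> n"
  shows "real (card {f \<in> walks E V n u v. f i = x \<and> f j = y}) =
    walk_count E V i u x * walk_count E V (j - i) x y * walk_count E V (n - j) y v"
proof -
  have "real (card {f \<in> walks E V n u v. f i = x \<and> f j = y}) =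
      (\<Sum>w\<in>V. real (card {g \<in> walks E V j u w. g i = x \<and> g j = y}) * walk_count E V (n - j) w v)"
    using card_walks_prefix[OF assms(2), of u v "\<lambda>g. g i = x \<and> g j = y"] assms(1) by simp
  also have "\<dots> = (\<Sum>w\<in>V. if w = y
      then real (card {g \<in> walks E V j u y. g i = x}) * walk_count E V (n - j) y v else 0)"
  proof (intro sum.cong refl)
    fix w
    have "{g \<in> walks E V j u w. g i = x \<and> g j = y} =
        (if w = y then {g \<in> walks E V j u y. g i = x} else {})"
      unfolding walks_def by auto
    thus "real (card {g \<in> walks E V j u w. g i = x \<and> g j = y}) * walk_count E V (n - j) w v =
        (if w = y then real (card {g \<in> walks E V j u y. g i = x}) * walk_count E V (n - j) y v else 0)"
      by simp
  qed
  also have "\<dots> = walk_count E V i u x * walk_count E V (j - i) x y * walk_count E V (n - j) y v"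
    using finite_vertices walk_count_eq_0[of x V y E "j - i"] card_walks_through[OF assms(1)]
    by (simp add: sum.delta)
  finally show ?thesis .
qed

lemma walk_count_add: "walk_count E V (i + j) u v = (\<Sum>w\<in>V. walk_count E V i u w * walk_count E V j w v)"
proof -
  have eq: "walks E V (i + j) u v = (\<Union>w\<in>V. {f \<in> walks E V (i + j) u v. f i = w})"
    using walk_vertex[of _ E V "i + j" u v i] by auto
  have "card (walks E V (i + j) u v) = (\<Sum>w\<in>V. card {f \<in> walks E V (i + j) u v. f i = w})"
    by (subst eq, rule card_UN_disjoint) (use finite_vertices finite_walks in auto)
  thus ?thesis by (simp add: walk_count_def card_walks_through)
qed

lemma walk_count_1: "walk_count E V (Suc 0) u v = (if u \<in> V then adj E u v else 0)"
proof -
  have "walk_count E V (Suc 0) u v = (\<Sum>w\<in>V. if w = u then (if u \<in> V then adj E u v else 0) else 0)"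
    unfolding walk_count_Suc by (intro sum.cong refl) (auto simp: walk_count_0)
  thus ?thesis using finite_vertices by (simp add: sum.delta)
qed

lemma walk_count_Suc_left:
  "u \<in> V \<Longrightarrow> walk_count E V (Suc n) u v = (\<Sum>w\<in>V. adj E u w * walk_count E V n w v)"
  using walk_count_add[of 1 n u v] by (simp add: walk_count_1)

lemma walk_count_commute: "walk_count E V n u v = walk_count E V n v u"
proof (induction n arbitrary: u v)
  case 0
  then show ?case by (auto simp: walk_count_0)
next
  case (Suc n)
  show ?case
  proof (cases "v \<in> V")
    case True
    have "walk_count E V (Suc n) u v = (\<Sum>w\<in>V. adj E v w * walk_count E V n w u)"
      unfolding walk_count_Suc by (intro sum.cong refl) (simp add: Suc.IH adj_commute mult.commute)
    also have "\<dots> = walk_count E V (Suc n) v u" using True by (simp add: walk_count_Suc_left)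
    finally show ?thesis .
  qed (simp add: walk_count_eq_0)
qed

lemma closed_walk_count_double: "walk_count E V (j + j) x x = (\<Sum>y\<in>V. (walk_count E V j x y)\<^sup>2)"
  by (simp add: walk_count_add power2_eq_square walk_count_commute[of j _ x])

lemma log_convex_upto_closed_walk_count: "log_convex_upto k (\<lambda>j. walk_count E V (j + j) x x)"
  unfolding log_convex_upto_def
proof (intro allI impI)
  fix j
  have "walk_count E V (Suc j + Suc j) x x = walk_count E V (j + Suc (Suc j)) x x" by simp
  also have "\<dots> = (\<Sum>y\<in>V. walk_count E V j x y * walk_count E V (Suc (Suc j)) y x)"
    by (rule walk_count_add)
  also have "\<dots> = (\<Sum>y\<in>V. walk_count E V j x y * walk_count E V (Suc (Suc j)) x y)"
    by (simp add: walk_count_commute[of "Suc (Suc j)" _ x])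
  finally have "(walk_count E V (Suc j + Suc j) x x)\<^sup>2 \<le>
      (\<Sum>y\<in>V. (walk_count E V j x y)\<^sup>2) * (\<Sum>y\<in>V. (walk_count E V (Suc (Suc j)) x y)\<^sup>2)"
    using Cauchy_Schwarz_ineq_sum by simp
  thus "(walk_count E V (Suc j + Suc j) x x)\<^sup>2 \<le>
      walk_count E V (j + j) x x * walk_count E V (Suc (Suc j) + Suc (Suc j)) x x"
    by (simp only: closed_walk_count_double)
qed

lemma closed_walk_count_2:
  assumes "x \<in> V"
  shows "walk_count E V 2 x x = degree E V x"
proof -
  have "walk_count E V (1 + 1) x x = (\<Sum>y\<in>V. adj E x y)"
    unfolding closed_walk_count_double using assms by (intro sum.cong) (simp_all add: walk_count_1 adj_def)
  thus ?thesis by (simp add: degree_def numeral_2_eq_2)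
qed

lemma walk_count_Suc_isolated:
  assumes "degree E V x = 0"
  shows "walk_count E V (Suc n) x y = 0"
proof (cases "x \<in> V")
  case True
  have "\<forall>w\<in>V. adj E x w = 0"
    using assms finite_vertices unfolding degree_def adj_def by (subst (asm) sum_nonneg_eq_0_iff) auto
  thus ?thesis using True by (simp add: walk_count_Suc_left)
qed (simp add: walk_count_eq_0)

definition walks_from :: "'a set \<Rightarrow> nat \<Rightarrow> 'a \<Rightarrow> real" where
  "walks_from A n y = (\<Sum>x\<in>A. walk_count E V n x y)"

definition walks_within :: "'a set \<Rightarrow> nat \<Rightarrow> real" where
  "walks_within A n = (\<Sum>x\<in>A. \<Sum>x'\<in>A. walk_count E V n x x')"

lemma walks_within_add: "walks_within A (i + j) = (\<Sum>y\<in>V. walks_from A i y * walks_from A j y)"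
proof -
  have "(\<Sum>y\<in>V. walks_from A i y * walks_from A j y) =
      (\<Sum>y\<in>V. \<Sum>x\<in>A. \<Sum>x'\<in>A. walk_count E V i x y * walk_count E V j x' y)"
    unfolding walks_from_def by (simp add: sum_product)
  also have "\<dots> = (\<Sum>x\<in>A. \<Sum>y\<in>V. \<Sum>x'\<in>A. walk_count E V i x y * walk_count E V j x' y)"
    by (rule sum.swap)
  also have "\<dots> = (\<Sum>x\<in>A. \<Sum>x'\<in>A. \<Sum>y\<in>V. walk_count E V i x y * walk_count E V j x' y)"
    by (intro sum.cong refl sum.swap)
  moreover have "walk_count E V (i + j) x x' = (\<Sum>y\<in>V. walk_count E V i x y * walk_count E V j x' y)"
    for x x' by (simp add: walk_count_add walk_count_commute[of j _ x'])
  ultimately show ?thesis by (simp add: walks_within_def)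
qed

lemma walks_within_double: "walks_within A (j + j) = (\<Sum>y\<in>V. (walks_from A j y)\<^sup>2)"
  by (simp add: walks_within_add power2_eq_square)

lemma log_convex_upto_walks_within: "log_convex_upto k (\<lambda>j. walks_within A (j + j))"
  unfolding log_convex_upto_def
proof (intro allI impI)
  fix j
  have "walks_within A (Suc j + Suc j) = (\<Sum>y\<in>V. walks_from A j y * walks_from A (Suc (Suc j)) y)"
    by (metis walks_within_add add_Suc add_Suc_right)
  hence "(walks_within A (Suc j + Suc j))\<^sup>2 \<le>
      (\<Sum>y\<in>V. (walks_from A j y)\<^sup>2) * (\<Sum>y\<in>V. (walks_from A (Suc (Suc j)) y)\<^sup>2)"
    using Cauchy_Schwarz_ineq_sum by simp
  thus "(walks_within A (Suc j + Suc j))\<^sup>2 \<le>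
      walks_within A (j + j) * walks_within A (Suc (Suc j) + Suc (Suc j))"
    by (simp only: walks_within_double)
qed

lemma walks_within_0: "A \<subseteq> V \<Longrightarrow> walks_within A 0 = real (card A)"
  unfolding walks_within_def using finite_vertices
  by (simp add: walk_count_0 subset_iff sum.delta finite_subset cong: sum.cong)

lemma walks_within_le_closed_walks:
  "walks_within A (j + j) \<le> real (card A) * (\<Sum>x\<in>A. walk_count E V (j + j) x x)"
proof -
  have "walks_within A (j + j) \<le> (\<Sum>y\<in>V. (\<Sum>x\<in>A. (walk_count E V j x y)\<^sup>2) * real (card A))"
    unfolding walks_within_double walks_from_def by (intro sum_mono sum_squared_le_sum_of_squares)
  also have "\<dots> = real (card A) * (\<Sum>x\<in>A. \<Sum>y\<in>V. (walk_count E V j x y)\<^sup>2)"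
    by (simp add: sum_distrib_left sum.swap[of _ V] mult.commute)
  finally show ?thesis by (simp add: closed_walk_count_double)
qed

lemma non_injective_closed_walks_subset:
  "{f \<in> walks E V n v v. \<not> inj_on f {..<n}} \<subseteq>
     (\<Union>(i, j)\<in>{(i, j). i < j \<and> j < n}. \<Union>x\<in>V. {f \<in> walks E V n v v. f i = x \<and> f j = x})"
proof
  fix f assume f: "f \<in> {f \<in> walks E V n v v. \<not> inj_on f {..<n}}"
  then obtain a b where "a < n" "b < n" "a \<noteq> b" "f a = f b"
    unfolding inj_on_def by auto
  then obtain i j where ij: "i < j" "j < n" "f i = f j"
    by (metis linorder_neqE_nat)
  moreover have "f i \<in> V" using f ij walk_vertex[of f E V n v v i] by simp
  ultimately show "f \<in> (\<Union>(i, j)\<in>{(i, j). i < j \<and> j < n}. \<Union>x\<in>V. {f \<in> walks E V n v v. f i = x \<and> f j = x})"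
    using f by (intro UN_I[of "(i, j)"] UN_I[of "f i"]) auto
qed

lemma card_non_injective_closed_walks_at_le:
  "real (card {f \<in> walks E V n v v. \<not> inj_on f {..<n}}) \<le>
     (\<Sum>(i, j)\<in>{(i, j). i < j \<and> j < n}. \<Sum>x\<in>V.
        walk_count E V i v x * walk_count E V (j - i) x x * walk_count E V (n - j) x v)"
proof -
  define P where "P = {(i, j). i < j \<and> j < n}"
  have finite_P: "finite P" unfolding P_def
    by (rule finite_subset[of _ "{..<n} \<times> {..<n}"]) auto
  have "(\<Union>(i, j)\<in>P. \<Union>x\<in>V. {f \<in> walks E V n v v. f i = x \<and> f j = x}) \<subseteq> walks E V n v v"
    by auto
  hence "card {f \<in> walks E V n v v. \<not> inj_on f {..<n}} \<le>
      card (\<Union>(i, j)\<in>P. \<Union>x\<in>V. {f \<in> walks E V n v v. f i = x \<and> f j = x})"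
    using non_injective_closed_walks_subset[of n v] finite_walks unfolding P_def
    by (intro card_mono) (auto intro: finite_subset)
  also have "\<dots> \<le> (\<Sum>(i, j)\<in>P. card (\<Union>x\<in>V. {f \<in> walks E V n v v. f i = x \<and> f j = x}))"
    using card_UN_le[OF finite_P] by (simp add: case_prod_beta)
  also have "\<dots> \<le> (\<Sum>(i, j)\<in>P. \<Sum>x\<in>V. card {f \<in> walks E V n v v. f i = x \<and> f j = x})"
    unfolding case_prod_beta by (intro sum_mono card_UN_le finite_vertices)
  finally have "real (card {f \<in> walks E V n v v. \<not> inj_on f {..<n}}) \<le>
      real (\<Sum>(i, j)\<in>P. \<Sum>x\<in>V. card {f \<in> walks E V n v v. f i = x \<and> f j = x})"
    by (rule of_nat_mono)
  hence "real (card {f \<in> walks E V n v v. \<not> inj_on f {..<n}}) \<le>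
      (\<Sum>(i, j)\<in>P. \<Sum>x\<in>V. real (card {f \<in> walks E V n v v. f i = x \<and> f j = x}))"
    by (simp add: case_prod_beta)
  also have "\<dots> = (\<Sum>(i, j)\<in>P. \<Sum>x\<in>V.
      walk_count E V i v x * walk_count E V (j - i) x x * walk_count E V (n - j) x v)"
    by (intro sum.cong refl) (auto simp: P_def card_walks_through2)
  finally show ?thesis unfolding P_def .
qed

lemma card_non_injective_closed_walks_le:
  "(\<Sum>v\<in>V. real (card {f \<in> walks E V n v v. \<not> inj_on f {..<n}})) \<le>
     (\<Sum>(i, j)\<in>{(i, j). i < j \<and> j < n}. \<Sum>x\<in>V. walk_count E V (j - i) x x * walk_count E V (n - (j - i)) x x)"
proof -
  define P where "P = {(i, j). i < j \<and> j < n}"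
  have "(\<Sum>v\<in>V. real (card {f \<in> walks E V n v v. \<not> inj_on f {..<n}})) \<le>
      (\<Sum>v\<in>V. \<Sum>(i, j)\<in>P. \<Sum>x\<in>V.
         walk_count E V i v x * walk_count E V (j - i) x x * walk_count E V (n - j) x v)"
    unfolding P_def by (intro sum_mono card_non_injective_closed_walks_at_le)
  also have "\<dots> = (\<Sum>(i, j)\<in>P. \<Sum>v\<in>V. \<Sum>x\<in>V.
      walk_count E V i v x * walk_count E V (j - i) x x * walk_count E V (n - j) x v)"
    unfolding case_prod_beta by (rule sum.swap)
  also have "\<dots> = (\<Sum>(i, j)\<in>P. \<Sum>x\<in>V. \<Sum>v\<in>V.
      walk_count E V i v x * walk_count E V (j - i) x x * walk_count E V (n - j) x v)"
    by (intro sum.cong refl, clarify, rule sum.swap)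
  also have "\<dots> = (\<Sum>(i, j)\<in>P. \<Sum>x\<in>V. walk_count E V (j - i) x x * walk_count E V (n - (j - i)) x x)"
  proof (intro sum.cong refl, clarify)
    fix i j assume "(i, j) \<in> P"
    hence "n - (j - i) = (n - j) + i" unfolding P_def by auto
    hence "(\<Sum>v\<in>V. walk_count E V i v x * walk_count E V (j - i) x x * walk_count E V (n - j) x v) =
        walk_count E V (j - i) x x * walk_count E V (n - (j - i)) x x" for x
      by (simp only: walk_count_add sum_distrib_left) (intro sum.cong refl, simp add: ac_simps)
    thus "(\<Sum>x\<in>V. \<Sum>v\<in>V. walk_count E V i v x * walk_count E V (j - i) x x * walk_count E V (n - j) x v) =
        (\<Sum>x\<in>V. walk_count E V (j - i) x x * walk_count E V (n - (j - i)) x x)"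
      by simp
  qed
  finally show ?thesis unfolding P_def .
qed

lemma inj_on_restrict_closed_walks:
  assumes "0 < n"
  shows "inj_on (\<lambda>f. restrict f {..<n}) (\<Union>v\<in>V. walks E V n v v)"
proof (rule inj_onI, rule ext)
  fix f g x assume f: "f \<in> (\<Union>v\<in>V. walks E V n v v)" and g: "g \<in> (\<Union>v\<in>V. walks E V n v v)"
    and eq: "restrict f {..<n} = restrict g {..<n}"
  have closed: "f \<in> {..n} \<rightarrow>\<^sub>E V" "f n = f 0" "g \<in> {..n} \<rightarrow>\<^sub>E V" "g n = g 0"
    using f g unfolding walks_def by auto
  have lt: "f i = g i" if "i < n" for i using fun_cong[OF eq, of i] that by simp
  consider "x < n" | "x = n" | "n < x" by linarith
  then show "f x = g x"
  proof cases
    case 2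
    then show ?thesis using lt[of 0] assms closed by simp
  next
    case 3
    then show ?thesis using PiE_arb[OF closed(1)] PiE_arb[OF closed(3)] by simp
  qed (rule lt)
qed

lemma Union_cycle_edges:
  assumes "0 < n"
  shows "\<Union>(cycle_edges n f) = f ` {..<n}"
proof (intro equalityI subsetI)
  fix z assume "z \<in> \<Union>(cycle_edges n f)"
  then obtain e where "e \<in> cycle_edges n f" "z \<in> e" by blast
  then obtain i where "i < n" "z \<in> {f i, f ((i + 1) mod n)}" unfolding cycle_edges_def by blast
  moreover have "(i + 1) mod n < n" using assms by simp
  ultimately show "z \<in> f ` {..<n}" by blast
next
  fix z assume "z \<in> f ` {..<n}"
  then obtain i where "i < n" "z = f i" by blast
  hence "{f i, f ((i + 1) mod n)} \<in> cycle_edges n f" unfolding cycle_edges_def by blast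
  with \<open>z = f i\<close> show "z \<in> \<Union>(cycle_edges n f)" by blast
qed

lemma card_closed_walks_with_cycle_edges_le:
  assumes "0 < n"
  shows "card {f \<in> (\<Union>v\<in>V. walks E V n v v). cycle_edges n f = H} \<le> n ^ n"
proof (cases "{f \<in> (\<Union>v\<in>V. walks E V n v v). cycle_edges n f = H} = {}")
  case False
  define U where "U = {f \<in> (\<Union>v\<in>V. walks E V n v v). cycle_edges n f = H}"
  obtain f0 where "f0 \<in> U" using False unfolding U_def by blast
  hence "H = cycle_edges n f0" unfolding U_def by simp
  hence H: "\<Union>H = f0 ` {..<n}" using Union_cycle_edges[OF assms] by simp
  have "inj_on (\<lambda>f. restrict f {..<n}) U"
    using inj_on_restrict_closed_walks[OF assms] unfolding U_def by (rule inj_on_subset) auto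
  moreover have "restrict f {..<n} \<in> {..<n} \<rightarrow>\<^sub>E \<Union>H" if "f \<in> U" for f
  proof -
    have "H = cycle_edges n f" using that unfolding U_def by simp
    hence "\<Union>H = f ` {..<n}" using Union_cycle_edges[OF assms] by simp
    thus ?thesis by auto
  qed
  hence "(\<lambda>f. restrict f {..<n}) ` U \<subseteq> {..<n} \<rightarrow>\<^sub>E \<Union>H" by blast
  ultimately have "card U \<le> card ({..<n} \<rightarrow>\<^sub>E \<Union>H)"
    using H by (intro card_inj_on_le) (simp_all add: finite_PiE)
  also have "\<dots> = card (\<Union>H) ^ n" by (simp add: card_PiE H)
  also have "\<dots> \<le> n ^ n" unfolding H by (intro power_mono card_image_le[of "{..<n}", simplified]) simp
  finally show ?thesis unfolding U_def .
next
  case True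
  then show ?thesis by (simp only: card.empty)
qed

lemma cycle_edges_in_cycle_copies:
  assumes "f \<in> walks E V n v v" "inj_on f {..<n}"
  shows "cycle_edges n f \<in> cycle_copies n E"
proof -
  have "{f i, f ((i + 1) mod n)} \<in> E" if "i < n" for i
  proof (cases "Suc i < n")
    case False
    hence "Suc i = n" using that by simp
    hence "(i + 1) mod n = 0" by simp
    with \<open>Suc i = n\<close> show ?thesis using assms(1) that unfolding walks_def by force
  qed (use assms(1) that in \<open>simp add: walks_def\<close>)
  thus ?thesis using assms(2) unfolding cycle_copies_def cycle_edges_def by blast
qed

lemma card_injective_closed_walks_le:
  assumes "0 < n"
  shows "(\<Sum>v\<in>V. real (card {f \<in> walks E V n v v. inj_on f {..<n}})) \<le>
    real n ^ n * real (card (cycle_copies n E))"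
proof -
  define U where "U = (\<Union>v\<in>V. {f \<in> walks E V n v v. inj_on f {..<n}})"
  define C where "C = cycle_copies n E"
  have finite_C: "finite C" unfolding C_def cycle_copies_def
    by (rule finite_subset[of _ "Pow E"]) (use finite_edges in auto)
  have "finite {f \<in> walks E V n v v. inj_on f {..<n}}" for v by (simp add: finite_walks)
  moreover have "walks E V n v v \<inter> walks E V n v' v' = {}" if "v \<noteq> v'" for v v'
    using that unfolding walks_def by auto
  ultimately have card_U: "card U = (\<Sum>v\<in>V. card {f \<in> walks E V n v v. inj_on f {..<n}})"
    unfolding U_def by (intro card_UN_disjoint finite_vertices) auto
  have "U \<subseteq> (\<Union>H\<in>C. {f \<in> (\<Union>v\<in>V. walks E V n v v). cycle_edges n f = H})"
    using cycle_edges_in_cycle_copies unfolding U_def C_def by blast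
  hence "card U \<le> (\<Sum>H\<in>C. card {f \<in> (\<Union>v\<in>V. walks E V n v v). cycle_edges n f = H})"
    by (intro order.trans[OF card_mono card_UN_le[OF finite_C]])
       (use finite_C finite_vertices finite_walks in auto)
  also have "\<dots> \<le> (\<Sum>H\<in>C. n ^ n)"
    by (intro sum_mono card_closed_walks_with_cycle_edges_le[OF assms])
  also have "\<dots> = n ^ n * card C" by simp
  finally have "real (card U) \<le> real n ^ n * real (card C)"
    by (metis of_nat_le_iff of_nat_mult of_nat_power)
  thus ?thesis unfolding C_def card_U by simp
qed

lemma sum_card_injective_closed_walks:
  "(\<Sum>v\<in>V. real (card {f \<in> walks E V n v v. inj_on f {..<n}})) =
     (\<Sum>v\<in>V. walk_count E V n v v) - (\<Sum>v\<in>V. real (card {f \<in> walks E V n v v. \<not> inj_on f {..<n}}))"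
proof -
  have "walk_count E V n v v =
      real (card {f \<in> walks E V n v v. inj_on f {..<n}}) + real (card {f \<in> walks E V n v v. \<not> inj_on f {..<n}})"
    for v
  proof -
    have "walks E V n v v \<inter> {f. inj_on f {..<n}} = {f \<in> walks E V n v v. inj_on f {..<n}}"
      and "walks E V n v v - {f. inj_on f {..<n}} = {f \<in> walks E V n v v. \<not> inj_on f {..<n}}"
      by auto
    thus ?thesis using card_Int_Diff[OF finite_walks, of n v v "{f. inj_on f {..<n}}"]
      unfolding walk_count_def by simp
  qed
  thus ?thesis by (simp add: sum.distrib)
qed

end

section \<open>Bipartite graphs\<close>

lemma card_above_multiple_of_average_le:
  fixes f :: "'a \<Rightarrow> real"
  assumes "finite X" "\<And>x. x \<in> X \<Longrightarrow> 0 \<le> f x" "0 < K" "0 < (\<Sum>x\<in>X. f x)"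
  shows "K * real (card {x \<in> X. K * (\<Sum>x\<in>X. f x) / real (card X) < f x}) \<le> real (card X)"
proof -
  define S where "S = (\<Sum>x\<in>X. f x)"
  have "X \<noteq> {}" using assms(4) by auto
  hence X: "0 < real (card X)" using assms(1) by (simp add: card_gt_0_iff)
  have "real (card {x \<in> X. K * S / real (card X) < f x}) * (K * S / real (card X))
      \<le> (\<Sum>x\<in>{x \<in> X. K * S / real (card X) < f x}. f x)"
    by (rule sum_bounded_below) auto
  also have "\<dots> \<le> S" unfolding S_def using assms(1,2) by (intro sum_mono2) auto
  finally show ?thesis using X assms(4) unfolding S_def[symmetric] by (simp add: field_simps)
qed

lemma one_third_of_cover:
  assumes "finite E" "E \<subseteq> E\<^sub>1 \<union> E\<^sub>2 \<union> E\<^sub>3" "E\<^sub>1 \<union> E\<^sub>2 \<union> E\<^sub>3 \<subseteq> E"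
  shows "real (card E) / 3 \<le> real (card E\<^sub>1) \<or> real (card E) / 3 \<le> real (card E\<^sub>2) \<or>
    real (card E) / 3 \<le> real (card E\<^sub>3)"
proof -
  have "finite (E\<^sub>1 \<union> E\<^sub>2 \<union> E\<^sub>3)" using assms(1,3) by (rule finite_subset[rotated])
  hence "card E \<le> card (E\<^sub>1 \<union> E\<^sub>2 \<union> E\<^sub>3)" using assms(2) by (rule card_mono)
  also have "\<dots> \<le> card (E\<^sub>1 \<union> E\<^sub>2) + card E\<^sub>3" by (rule card_Un_le)
  also have "\<dots> \<le> card E\<^sub>1 + card E\<^sub>2 + card E\<^sub>3" using card_Un_le[of E\<^sub>1 E\<^sub>2] by simp
  finally show ?thesis by linarith
qed

lemma degree_le_if_uncovered_above:
  assumes "E' \<subseteq> E" "0 \<le> t" "t < degree E V x \<Longrightarrow> \<forall>e\<in>E'. x \<notin> e"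
  shows "degree E' V x \<le> t"
proof (cases "t < degree E V x")
  case True
  hence "degree E' V x = 0" using assms(3) unfolding degree_def adj_def by (intro sum.neutral) auto
  thus ?thesis using assms(2) by simp
next
  case False
  moreover have "degree E' V x \<le> degree E V x"
    using assms(1) unfolding degree_def adj_def by (intro sum_mono) auto
  ultimately show ?thesis by linarith
qed

lemma card_cycle_copies_mono:
  assumes "E' \<subseteq> E" "finite E"
  shows "card (cycle_copies n E') \<le> card (cycle_copies n E)"
proof (rule card_mono)
  show "finite (cycle_copies n E)" unfolding cycle_copies_def
    by (rule finite_subset[of _ "Pow E"]) (use assms in auto)
qed (use assms(1) in \<open>auto simp: cycle_copies_def\<close>)

lemma bipartite_graph_mono: "bipartite_graph A B E \<Longrightarrow> E' \<subseteq> E \<Longrightarrow> bipartite_graph A B E'"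
  unfolding bipartite_graph_def by blast

lemma bipartite_graph_swap:
  assumes "bipartite_graph A B E"
  shows "bipartite_graph B A E"
  unfolding bipartite_graph_def
proof (intro conjI ballI)
  show "finite B" "finite A" "B \<inter> A = {}" using assms unfolding bipartite_graph_def by auto
  fix e assume "e \<in> E"
  then obtain x y where "x \<in> A" "y \<in> B" "e = {x, y}" using assms unfolding bipartite_graph_def by blast
  thus "\<exists>x\<in>B. \<exists>y\<in>A. e = {x, y}" using insert_commute by blast
qed

lemma bipartite_graph_restrict:
  assumes "bipartite_graph A B E" "A' \<subseteq> A"
  shows "bipartite_graph A' B {e \<in> E. e \<inter> A' \<noteq> {}}"
  unfolding bipartite_graph_def
proof (intro conjI ballI)
  show "finite A'" using assms(1) by (intro finite_subset[OF assms(2)]) (simp add: bipartite_graph_def)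
  show "finite B" "A' \<inter> B = {}" using assms unfolding bipartite_graph_def by auto
  fix e assume "e \<in> {e \<in> E. e \<inter> A' \<noteq> {}}"
  hence "e \<in> E" "e \<inter> A' \<noteq> {}" by simp_all
  from \<open>e \<in> E\<close> obtain x y where "x \<in> A" "y \<in> B" "e = {x, y}"
    using assms(1) unfolding bipartite_graph_def by blast
  moreover have "y \<notin> A'" using \<open>y \<in> B\<close> assms unfolding bipartite_graph_def by blast
  ultimately have "x \<in> A'" using \<open>e \<inter> A' \<noteq> {}\<close> by auto
  with \<open>y \<in> B\<close> \<open>e = {x, y}\<close> show "\<exists>x\<in>A'. \<exists>y\<in>B. e = {x, y}" by blast
qed

text \<open>\<open>(2k)\<^sup>2\<close> bounds the number of pairs of positions at which a closed walk of length \<open>2k\<close> can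
  repeat a vertex; \<open>\<mu> = 2(2k)\<^sup>2\<close> in \<open>log_convex_upto_product_le\<close> makes these walks cost at most half
  of all closed walks.\<close>
definition degenerate_walk_const :: "nat \<Rightarrow> real" where
  "degenerate_walk_const k = real (2 * k) ^ 2 * (2 * real (2 * k) ^ 2) ^ (k * k)"

lemma one_le_degenerate_walk_const:
  assumes "1 \<le> k"
  shows "1 \<le> degenerate_walk_const k"
proof -
  have "1 \<le> real (2 * k)" using assms by simp
  hence "1 \<le> real (2 * k) ^ 2" by (rule one_le_power)
  moreover from this have "1 \<le> (2 * real (2 * k) ^ 2) ^ (k * k)" by (intro one_le_power) simp
  ultimately show ?thesis
    unfolding degenerate_walk_const_def using mult_mono[of 1 _ 1] by fastforce
qed

locale bipartite =
  fixes A B :: "'a set" and E :: "'a set set"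
  assumes bipartite: "bipartite_graph A B E"
begin

lemma finite_A: "finite A" and finite_B: "finite B" and disjoint: "A \<inter> B = {}"
  and edge_between: "e \<in> E \<Longrightarrow> \<exists>x\<in>A. \<exists>y\<in>B. e = {x, y}"
  using bipartite unfolding bipartite_graph_def by auto

sublocale finite_graph E "A \<union> B"
  by unfold_locales (use finite_A finite_B edge_between in auto)

lemma edge_sides: "{x, y} \<in> E \<Longrightarrow> (x \<in> A \<and> y \<in> B) \<or> (x \<in> B \<and> y \<in> A)"
  using edge_between[of "{x, y}"] by (auto simp: doubleton_eq_iff)

lemma walk_parity:
  assumes "f \<in> walks E (A \<union> B) n u v"
  shows "i \<le> n \<Longrightarrow> f i \<in> A \<longleftrightarrow> (u \<in> A \<longleftrightarrow> even i)"
proof (induction i)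
  case 0
  then show ?case using assms by (simp add: walks_def)
next
  case (Suc i)
  have "{f i, f (Suc i)} \<in> E" using assms Suc.prems by (simp add: walks_def)
  hence "f (Suc i) \<in> A \<longleftrightarrow> f i \<notin> A" using edge_sides disjoint by blast
  thus ?case using Suc by simp
qed

lemma closed_walk_count_odd: "odd n \<Longrightarrow> walk_count E (A \<union> B) n x x = 0"
  using walk_parity walk_endpoint by (fastforce simp: walk_count_def finite_walks)

lemma degree_in_A: "x \<in> A \<Longrightarrow> degree E (A \<union> B) x = (\<Sum>y\<in>B. adj E x y)"
proof -
  assume "x \<in> A"
  hence "(\<Sum>y\<in>A. adj E x y) = 0" using edge_sides disjoint by (intro sum.neutral) (auto simp: adj_def)
  thus ?thesis using finite_A finite_B disjoint by (simp add: degree_def sum.union_disjoint)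
qed

lemma degree_in_B: "y \<in> B \<Longrightarrow> degree E (A \<union> B) y = (\<Sum>x\<in>A. adj E x y)"
proof -
  assume "y \<in> B"
  hence "(\<Sum>x\<in>B. adj E y x) = 0" using edge_sides disjoint by (intro sum.neutral) (auto simp: adj_def)
  thus ?thesis using finite_A finite_B disjoint by (simp add: degree_def sum.union_disjoint adj_commute)
qed

lemma sum_adj_eq_card_edges: "(\<Sum>x\<in>A. \<Sum>y\<in>B. adj E x y) = real (card E)"
proof -
  define P where "P = {p \<in> A \<times> B. {fst p, snd p} \<in> E}"
  have "inj_on (\<lambda>p. {fst p, snd p}) P"
    using disjoint by (auto simp: P_def inj_on_def doubleton_eq_iff)
  moreover have "(\<lambda>p. {fst p, snd p}) ` P = E"
  proof (intro equalityI subsetI)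
    fix e assume "e \<in> E"
    with edge_between obtain x y where "x \<in> A" "y \<in> B" "e = {x, y}" by blast
    with \<open>e \<in> E\<close> show "e \<in> (\<lambda>p. {fst p, snd p}) ` P"
      unfolding P_def by (intro image_eqI[of _ _ "(x, y)"]) auto
  qed (auto simp: P_def)
  ultimately have "card P = card E" by (metis card_image)
  have "(\<Sum>x\<in>A. \<Sum>y\<in>B. adj E x y) = (\<Sum>p\<in>A \<times> B. adj E (fst p) (snd p))"
    by (simp add: sum.cartesian_product case_prod_beta)
  also have "\<dots> = real (card P)"
    unfolding adj_def P_def using finite_A finite_B by (simp add: sum.inter_filter[symmetric])
  finally show ?thesis using \<open>card P = card E\<close> by simp
qed

lemma sum_degree_A: "(\<Sum>x\<in>A. degree E (A \<union> B) x) = real (card E)"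
  using sum_adj_eq_card_edges by (simp add: degree_in_A)

lemma sum_degree_B: "(\<Sum>y\<in>B. degree E (A \<union> B) y) = real (card E)"
  using sum_adj_eq_card_edges by (simp add: degree_in_B sum.swap[of _ A B])

lemma card_A_pos: "E \<noteq> {} \<Longrightarrow> card A > 0" and card_B_pos: "E \<noteq> {} \<Longrightarrow> card B > 0"
  using edge_between finite_A finite_B by (fastforce simp: card_gt_0_iff)+

lemma walks_from_1: "y \<in> B \<Longrightarrow> walks_from A 1 y = degree E (A \<union> B) y"
  unfolding walks_from_def by (simp add: degree_in_B walk_count_1)

text \<open>Sidorenko's inequality for even cycles, rooted in \<open>A\<close>: log-convexity gives
  \<open>S\<^sub>k \<ge> S\<^sub>0 (S\<^sub>1 / S\<^sub>0)\<^sup>k\<close>, and Cauchy--Schwarz gives \<open>S\<^sub>k \<le> |A| \<Sum>\<^sub>x\<^sub>\<in>\<^sub>A W\<^sub>2\<^sub>k(x,x)\<close>.\<close>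
lemma closed_walks_from_A_ge:
  assumes "E \<noteq> {}"
  shows "real (card E) ^ (2 * k) / (real (card A) ^ k * real (card B) ^ k) \<le>
    (\<Sum>x\<in>A. walk_count E (A \<union> B) (k + k) x x)"
proof -
  define m a b where "m = real (card E)" and "a = real (card A)" and "b = real (card B)"
  define s where "s = (\<lambda>j. walks_within A (j + j))"
  have a: "a > 0" and b: "b > 0" and m: "m > 0"
    using card_A_pos card_B_pos assms finite_edges by (auto simp: a_def b_def m_def card_gt_0_iff)
  have s0: "s 0 = a" unfolding s_def a_def by (simp add: walks_within_0)
  have "(\<Sum>y\<in>B. walks_from A 1 y) = m"
    using sum_degree_B walks_from_1 unfolding m_def by (metis (no_types, lifting) sum.cong)
  hence "m\<^sup>2 = (\<Sum>y\<in>B. walks_from A 1 y)\<^sup>2" by simp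
  also have "\<dots> \<le> (\<Sum>y\<in>B. (walks_from A 1 y)\<^sup>2) * b"
    unfolding b_def by (rule sum_squared_le_sum_of_squares)
  also have "(\<Sum>y\<in>B. (walks_from A 1 y)\<^sup>2) \<le> s 1"
    unfolding s_def walks_within_double using finite_A finite_B by (intro sum_mono2) auto
  finally have s1: "m\<^sup>2 / b \<le> s 1" using b by (simp add: mult_right_mono divide_le_eq)
  hence "s 1 > 0" using m b by (smt (verit) divide_pos_pos zero_less_power)
  moreover have "log_convex_upto (k + 1) s" unfolding s_def by (rule log_convex_upto_walks_within)
  ultimately have "s 0 * (s 1 / s 0) ^ k \<le> s k"
    using log_convex_upto_geometric_lower[of "k + 1" s k] s0 a by simp
  moreover have "s k \<le> a * (\<Sum>x\<in>A. walk_count E (A \<union> B) (k + k) x x)"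
    unfolding s_def a_def by (rule walks_within_le_closed_walks)
  ultimately have "a * (s 1 / a) ^ k \<le> a * (\<Sum>x\<in>A. walk_count E (A \<union> B) (k + k) x x)"
    using s0 by simp
  hence "(s 1 / a) ^ k \<le> (\<Sum>x\<in>A. walk_count E (A \<union> B) (k + k) x x)"
    using a by simp
  moreover have "(m\<^sup>2 / b / a) ^ k \<le> (s 1 / a) ^ k"
    using s1 a b by (intro power_mono divide_right_mono) auto
  moreover have "(m\<^sup>2 / b / a) ^ k = m ^ (2 * k) / (a ^ k * b ^ k)"
    by (simp add: power_divide power_mult_distrib power_mult[symmetric] mult.commute[of 2])
  ultimately show ?thesis by (simp add: m_def a_def b_def)
qed

lemma closed_walk_product_le:
  assumes x: "x \<in> A \<union> B" and r: "1 \<le> r" "r < 2 * k" and mu: "\<mu> \<ge> 1"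
  shows "walk_count E (A \<union> B) r x x * walk_count E (A \<union> B) (2 * k - r) x x \<le>
    \<mu>^(k*k) * degree E (A \<union> B) x ^ k + walk_count E (A \<union> B) (k + k) x x / \<mu>"
proof -
  define s where "s = (\<lambda>t. walk_count E (A \<union> B) (t + t) x x)"
  have nonneg: "0 \<le> \<mu>^(k*k) * degree E (A \<union> B) x ^ k + s k / \<mu>"
    using mu degree_nonneg[of E "A \<union> B" x] walk_count_nonneg[of E "A \<union> B" "k + k" x x]
    by (simp add: s_def)
  show ?thesis
  proof (cases "even r")
    case False
    thus ?thesis using nonneg closed_walk_count_odd by (simp add: s_def)
  next
    case True
    then obtain p where p: "r = p + p" by (metis evenE mult_2)
    define q where "q = k - p"
    have pq: "1 \<le> p" "1 \<le> q" "p + q = k" and r_q: "2 * k - r = q + q"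
      using p r unfolding q_def by auto
    have product: "walk_count E (A \<union> B) r x x * walk_count E (A \<union> B) (2 * k - r) x x = s p * s q"
      using r_q by (simp add: s_def p)
    show ?thesis
    proof (cases "degree E (A \<union> B) x = 0")
      case True
      have "p + p = Suc (p + p - 1)" using pq by simp
      hence "s p = 0" unfolding s_def using walk_count_Suc_isolated[OF True] by metis
      hence "walk_count E (A \<union> B) r x x * walk_count E (A \<union> B) (2 * k - r) x x = 0"
        using product by simp
      thus ?thesis using nonneg unfolding s_def by linarith
    next
      case False
      hence deg: "degree E (A \<union> B) x > 0" using degree_nonneg[of E "A \<union> B" x] by simp
      have lc: "log_convex_upto k s" unfolding s_def by (rule log_convex_upto_closed_walk_count)
      have s0: "s 0 = 1" and s1: "s 1 = degree E (A \<union> B) x"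
        using x closed_walk_count_2[OF x] by (simp_all add: s_def walk_count_0 numeral_2_eq_2)
      have pos: "\<And>j. j \<le> k \<Longrightarrow> s j > 0"
        using log_convex_upto_pos[OF lc] s0 s1 deg by simp
      show ?thesis
        using log_convex_upto_product_le[OF lc pos s0 mu pq(3,1,2)] product s1 by (simp add: s_def)
    qed
  qed
qed

lemma card_non_injective_closed_walks_le_degrees:
  assumes k: "1 \<le> k"
  shows "(\<Sum>v\<in>A \<union> B. real (card {f \<in> walks E (A \<union> B) (2 * k) v v. \<not> inj_on f {..<2 * k}})) \<le>
    degenerate_walk_const k * (\<Sum>x\<in>A \<union> B. degree E (A \<union> B) x ^ k) +
    (\<Sum>x\<in>A \<union> B. walk_count E (A \<union> B) (k + k) x x) / 2"
proof -
  define n where "n = 2 * k"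
  define \<mu> :: real where "\<mu> = 2 * real n ^ 2"
  define D where "D = (\<Sum>x\<in>A \<union> B. degree E (A \<union> B) x ^ k)"
  define C where "C = (\<Sum>x\<in>A \<union> B. walk_count E (A \<union> B) (k + k) x x)"
  define P where "P = {(i, j). i < j \<and> j < n}"
  have "1 \<le> real n" using k by (simp add: n_def)
  hence "1 \<le> real n ^ 2" by (rule one_le_power)
  hence mu: "\<mu> \<ge> 1" unfolding \<mu>_def by linarith
  have "0 \<le> D" unfolding D_def by (intro sum_nonneg zero_le_power degree_nonneg)
  moreover have "0 \<le> C" unfolding C_def by (intro sum_nonneg walk_count_nonneg)
  ultimately have bound_nonneg: "0 \<le> \<mu>^(k*k) * D + C / \<mu>" using mu by simp
  have term_le: "(\<Sum>x\<in>A \<union> B. walk_count E (A \<union> B) (j - i) x x * walk_count E (A \<union> B) (n - (j - i)) x x)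
      \<le> \<mu>^(k*k) * D + C / \<mu>" if "(i, j) \<in> P" for i j
  proof -
    have "1 \<le> j - i" "j - i < 2 * k" using that by (auto simp: P_def n_def)
    hence "(\<Sum>x\<in>A \<union> B. walk_count E (A \<union> B) (j - i) x x * walk_count E (A \<union> B) (n - (j - i)) x x)
        \<le> (\<Sum>x\<in>A \<union> B. \<mu>^(k*k) * degree E (A \<union> B) x ^ k + walk_count E (A \<union> B) (k + k) x x / \<mu>)"
      unfolding n_def by (intro sum_mono closed_walk_product_le mu)
    also have "\<dots> = \<mu>^(k*k) * D + C / \<mu>"
      by (simp add: D_def C_def sum.distrib sum_distrib_left sum_divide_distrib)
    finally show ?thesis .
  qed
  have "card P \<le> card ({..<n} \<times> {..<n})" unfolding P_def by (rule card_mono) auto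
  hence card_P: "real (card P) \<le> real n ^ 2" using of_nat_mono by (fastforce simp: power2_eq_square)
  have "(\<Sum>v\<in>A \<union> B. real (card {f \<in> walks E (A \<union> B) n v v. \<not> inj_on f {..<n}}))
      \<le> (\<Sum>(i, j)\<in>P. \<Sum>x\<in>A \<union> B. walk_count E (A \<union> B) (j - i) x x * walk_count E (A \<union> B) (n - (j - i)) x x)"
    unfolding P_def by (rule card_non_injective_closed_walks_le)
  also have "\<dots> \<le> real (card P) * (\<mu>^(k*k) * D + C / \<mu>)"
    using term_le by (intro sum_bounded_above) auto
  also have "\<dots> \<le> real n ^ 2 * (\<mu>^(k*k) * D + C / \<mu>)"
    using card_P bound_nonneg by (rule mult_right_mono)
  also have "\<dots> = degenerate_walk_const k * D + C / 2"
    using k by (simp add: degenerate_walk_const_def \<mu>_def n_def field_simps)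
  finally show ?thesis unfolding n_def D_def C_def .
qed

lemma cycle_copies_ge_closed_walks:
  assumes k: "1 \<le> k"
  shows "(\<Sum>x\<in>A \<union> B. walk_count E (A \<union> B) (k + k) x x) / 2
      - degenerate_walk_const k * (\<Sum>x\<in>A \<union> B. degree E (A \<union> B) x ^ k)
    \<le> real (2 * k) ^ (2 * k) * real (card (cycle_copies (2 * k) E))"
proof -
  have "(\<Sum>x\<in>A \<union> B. walk_count E (A \<union> B) (k + k) x x) / 2
      - degenerate_walk_const k * (\<Sum>x\<in>A \<union> B. degree E (A \<union> B) x ^ k)
    \<le> (\<Sum>v\<in>A \<union> B. walk_count E (A \<union> B) (2 * k) v v)
      - (\<Sum>v\<in>A \<union> B. real (card {f \<in> walks E (A \<union> B) (2 * k) v v. \<not> inj_on f {..<2 * k}}))"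
    using card_non_injective_closed_walks_le_degrees[OF k] by (simp add: mult_2)
  also have "\<dots> = (\<Sum>v\<in>A \<union> B. real (card {f \<in> walks E (A \<union> B) (2 * k) v v. inj_on f {..<2 * k}}))"
    by (rule sum_card_injective_closed_walks[symmetric])
  also have "\<dots> \<le> real (2 * k) ^ (2 * k) * real (card (cycle_copies (2 * k) E))"
    using k by (intro card_injective_closed_walks_le) simp
  finally show ?thesis .
qed

lemma sum_degree_power_le:
  assumes "\<And>x. x \<in> A \<Longrightarrow> degree E (A \<union> B) x \<le> \<Delta>\<^sub>A" "\<And>y. y \<in> B \<Longrightarrow> degree E (A \<union> B) y \<le> \<Delta>\<^sub>B"
  shows "(\<Sum>x\<in>A \<union> B. degree E (A \<union> B) x ^ k) \<le> real (card A) * \<Delta>\<^sub>A ^ k + real (card B) * \<Delta>\<^sub>B ^ k"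
proof -
  have "(\<Sum>x\<in>A \<union> B. degree E (A \<union> B) x ^ k) =
      (\<Sum>x\<in>A. degree E (A \<union> B) x ^ k) + (\<Sum>x\<in>B. degree E (A \<union> B) x ^ k)"
    using finite_A finite_B disjoint by (simp add: sum.union_disjoint)
  also have "(\<Sum>x\<in>A. degree E (A \<union> B) x ^ k) \<le> real (card A) * \<Delta>\<^sub>A ^ k"
    using assms(1) degree_nonneg by (intro sum_bounded_above power_mono) auto
  also have "(\<Sum>x\<in>B. degree E (A \<union> B) x ^ k) \<le> real (card B) * \<Delta>\<^sub>B ^ k"
    using assms(2) degree_nonneg by (intro sum_bounded_above power_mono) auto
  finally show ?thesis by simp
qed

lemma cycle_copies_ge_bounded_degree:
  assumes k: "1 \<le> k" and E: "E \<noteq> {}"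
    and deg: "\<And>x. x \<in> A \<Longrightarrow> degree E (A \<union> B) x \<le> \<Delta>\<^sub>A" "\<And>y. y \<in> B \<Longrightarrow> degree E (A \<union> B) y \<le> \<Delta>\<^sub>B"
  shows "real (card E) ^ (2 * k) / (2 * (real (card A) ^ k * real (card B) ^ k))
    - degenerate_walk_const k * (real (card A) * \<Delta>\<^sub>A ^ k + real (card B) * \<Delta>\<^sub>B ^ k)
    \<le> real (2 * k) ^ (2 * k) * real (card (cycle_copies (2 * k) E))"
proof -
  have "real (card E) ^ (2 * k) / (real (card A) ^ k * real (card B) ^ k)
      \<le> (\<Sum>x\<in>A. walk_count E (A \<union> B) (k + k) x x)"
    by (rule closed_walks_from_A_ge[OF E])
  also have "\<dots> \<le> (\<Sum>x\<in>A \<union> B. walk_count E (A \<union> B) (k + k) x x)"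
    using finite_A finite_B by (intro sum_mono2) (auto simp: walk_count_nonneg)
  finally have "real (card E) ^ (2 * k) / (2 * (real (card A) ^ k * real (card B) ^ k))
      \<le> (\<Sum>x\<in>A \<union> B. walk_count E (A \<union> B) (k + k) x x) / 2" by simp
  moreover have "degenerate_walk_const k * (\<Sum>x\<in>A \<union> B. degree E (A \<union> B) x ^ k)
      \<le> degenerate_walk_const k * (real (card A) * \<Delta>\<^sub>A ^ k + real (card B) * \<Delta>\<^sub>B ^ k)"
    using sum_degree_power_le[OF deg] one_le_degenerate_walk_const[OF k] by (simp add: mult_left_mono)
  ultimately show ?thesis using cycle_copies_ge_closed_walks[OF k] by linarith
qed

text \<open>By Markov's inequality at most a \<open>1/K\<close> fraction of each side has degree above \<open>K\<close> times the
  average, and the edges at such vertices together with the remaining edges cover \<open>E\<close>.\<close>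
lemma high_degree_part_or_bounded_degrees:
  assumes E: "E \<noteq> {}" and K: "K > 0"
  obtains (high_degree) A' B' E' where "bipartite_graph A' B' E'" "E' \<subseteq> E" "0 < card A'" "0 < card B'"
      "K * real (card A') \<le> real (card A) \<and> B' = B \<or> A' = A \<and> K * real (card B') \<le> real (card B)"
      "real (card E) / 3 \<le> real (card E')"
  | (bounded_degree) E' where "E' \<subseteq> E" "real (card E) / 3 \<le> real (card E')"
      "\<And>x. x \<in> A \<Longrightarrow> degree E' (A \<union> B) x \<le> K * real (card E) / real (card A)"
      "\<And>y. y \<in> B \<Longrightarrow> degree E' (A \<union> B) y \<le> K * real (card E) / real (card B)"
proof -
  define m a b where "m = real (card E)" and "a = real (card A)" and "b = real (card B)"
  have m: "m > 0" and a: "a > 0" and b: "b > 0"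
    using card_A_pos card_B_pos E finite_edges by (auto simp: a_def b_def m_def card_gt_0_iff)
  define A\<^sub>h where "A\<^sub>h = {x \<in> A. K * m / a < degree E (A \<union> B) x}"
  define B\<^sub>h where "B\<^sub>h = {y \<in> B. K * m / b < degree E (A \<union> B) y}"
  define E\<^sub>A where "E\<^sub>A = {e \<in> E. e \<inter> A\<^sub>h \<noteq> {}}"
  define E\<^sub>B where "E\<^sub>B = {e \<in> E. e \<inter> B\<^sub>h \<noteq> {}}"
  define E\<^sub>0 where "E\<^sub>0 = E - E\<^sub>A - E\<^sub>B"
  have "K * real (card {x \<in> A. K * (\<Sum>x\<in>A. degree E (A \<union> B) x) / real (card A) < degree E (A \<union> B) x})
      \<le> real (card A)"
    using m by (intro card_above_multiple_of_average_le finite_A degree_nonneg K) (simp add: sum_degree_A m_def)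
  hence card_A\<^sub>h: "K * real (card A\<^sub>h) \<le> a" by (simp add: A\<^sub>h_def a_def m_def sum_degree_A)
  have "K * real (card {x \<in> B. K * (\<Sum>x\<in>B. degree E (A \<union> B) x) / real (card B) < degree E (A \<union> B) x})
      \<le> real (card B)"
    using m by (intro card_above_multiple_of_average_le finite_B degree_nonneg K) (simp add: sum_degree_B m_def)
  hence card_B\<^sub>h: "K * real (card B\<^sub>h) \<le> b" by (simp add: B\<^sub>h_def b_def m_def sum_degree_B)
  have "m / 3 \<le> real (card E\<^sub>A) \<or> m / 3 \<le> real (card E\<^sub>B) \<or> m / 3 \<le> real (card E\<^sub>0)"
    unfolding m_def by (rule one_third_of_cover[OF finite_edges]) (auto simp: E\<^sub>A_def E\<^sub>B_def E\<^sub>0_def)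
  thus thesis
  proof (elim disjE)
    assume E\<^sub>A: "m / 3 \<le> real (card E\<^sub>A)"
    hence "E\<^sub>A \<noteq> {}" using m by auto
    hence "A\<^sub>h \<noteq> {}" unfolding E\<^sub>A_def by auto
    show thesis
    proof (rule high_degree)
      show "bipartite_graph A\<^sub>h B E\<^sub>A"
        unfolding E\<^sub>A_def by (rule bipartite_graph_restrict[OF bipartite]) (auto simp: A\<^sub>h_def)
      show "0 < card A\<^sub>h" using \<open>A\<^sub>h \<noteq> {}\<close> finite_A by (simp add: A\<^sub>h_def card_gt_0_iff)
    qed (use E\<^sub>A card_A\<^sub>h card_B_pos[OF E] in \<open>auto simp: E\<^sub>A_def m_def a_def\<close>)
  next
    assume E\<^sub>B: "m / 3 \<le> real (card E\<^sub>B)"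
    hence "E\<^sub>B \<noteq> {}" using m by auto
    hence "B\<^sub>h \<noteq> {}" unfolding E\<^sub>B_def by auto
    show thesis
    proof (rule high_degree)
      have "bipartite_graph B\<^sub>h A E\<^sub>B" unfolding E\<^sub>B_def
        by (rule bipartite_graph_restrict[OF bipartite_graph_swap[OF bipartite]]) (auto simp: B\<^sub>h_def)
      thus "bipartite_graph A B\<^sub>h E\<^sub>B" by (rule bipartite_graph_swap)
      show "0 < card B\<^sub>h" using \<open>B\<^sub>h \<noteq> {}\<close> finite_B by (simp add: B\<^sub>h_def card_gt_0_iff)
    qed (use E\<^sub>B card_B\<^sub>h card_A_pos[OF E] in \<open>auto simp: E\<^sub>B_def m_def b_def\<close>)
  next
    assume E\<^sub>0: "m / 3 \<le> real (card E\<^sub>0)"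
    have "E\<^sub>0 \<subseteq> E" by (auto simp: E\<^sub>0_def)
    have "degree E\<^sub>0 (A \<union> B) x \<le> K * m / a" if "x \<in> A" for x
      using that K m a
      by (intro degree_le_if_uncovered_above[OF \<open>E\<^sub>0 \<subseteq> E\<close>]) (auto simp: E\<^sub>0_def E\<^sub>A_def A\<^sub>h_def)
    moreover have "degree E\<^sub>0 (A \<union> B) y \<le> K * m / b" if "y \<in> B" for y
      using that K m b
      by (intro degree_le_if_uncovered_above[OF \<open>E\<^sub>0 \<subseteq> E\<close>]) (auto simp: E\<^sub>0_def E\<^sub>B_def B\<^sub>h_def)
    ultimately show thesis
      by (intro bounded_degree[of E\<^sub>0]) (use E\<^sub>0 in \<open>auto simp: E\<^sub>0_def m_def a_def b_def\<close>)
  qed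
qed

end

section \<open>Degree pruning\<close>

lemma density_bounds_inherited_one_side:
  fixes a b a' b' m m' C :: real
  assumes k: "1 \<le> k" and a': "0 < a'" "9 ^ k * a' \<le> a" and b': "0 < b'" "b' \<le> b"
    and C: "0 \<le> C" and m: "0 < m" "m / 3 \<le> m'"
    and dense: "C * a ^ k * b \<le> m ^ k" "C * a * b ^ k \<le> m ^ k"
  shows "C * a' ^ k * b' \<le> m' ^ k" "C * a' * b' ^ k \<le> m' ^ k"
    and "m ^ (2 * k) / (a ^ k * b ^ k) \<le> m' ^ (2 * k) / (a' ^ k * b' ^ k)"
proof -
  have "(9::real) \<le> 9 ^ k" using k by (metis one_le_numeral power_increasing power_one_right)
  hence "9 * a' \<le> 9 ^ k * a'" using a' by (intro mult_right_mono) auto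
  hence "9 * a' \<le> a" using a' by linarith
  hence "(9 * a') ^ k \<le> a ^ k" using a' by (intro power_mono) auto
  hence a'_pow: "9 ^ k * a' ^ k \<le> a ^ k" by (simp add: power_mult_distrib)
  have "(3::real) ^ k \<le> 9 ^ k" by (rule power_mono) auto
  hence "3 ^ k * a' ^ k \<le> 9 ^ k * a' ^ k" and "3 ^ k * a' \<le> 9 ^ k * a'"
    using a' by (intro mult_right_mono; simp)+
  hence a'_pow3: "3 ^ k * a' ^ k \<le> a ^ k" and a'_3: "3 ^ k * a' \<le> a" using a'_pow a' by linarith+
  have "0 < 3 ^ k * a'" using a' by simp
  hence a: "0 < a" using a'_3 by linarith
  have b'_pow: "b' ^ k \<le> b ^ k" using b' by (intro power_mono) auto
  have "(m / 3) ^ k \<le> m' ^ k" using m by (intro power_mono) auto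
  hence m_pow: "m ^ k \<le> 3 ^ k * m' ^ k" by (simp add: power_divide field_simps)
  have "3 ^ k * (C * a' ^ k * b') = C * ((3 ^ k * a' ^ k) * b')" by (simp add: ac_simps)
  also have "\<dots> \<le> C * (a ^ k * b)" using a'_pow3 a b' C by (intro mult_left_mono mult_mono) auto
  also have "\<dots> \<le> 3 ^ k * m' ^ k" using dense(1) m_pow by (simp add: mult.assoc)
  finally have "3 ^ k * (C * a' ^ k * b') \<le> 3 ^ k * m' ^ k" .
  thus "C * a' ^ k * b' \<le> m' ^ k" by simp
  have "3 ^ k * (C * a' * b' ^ k) = C * ((3 ^ k * a') * b' ^ k)" by (simp add: ac_simps)
  also have "\<dots> \<le> C * (a * b ^ k)" using a'_3 b'_pow a a' b' C by (intro mult_left_mono mult_mono) auto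
  also have "\<dots> \<le> 3 ^ k * m' ^ k" using dense(2) m_pow by (simp add: mult.assoc)
  finally have "3 ^ k * (C * a' * b' ^ k) \<le> 3 ^ k * m' ^ k" .
  thus "C * a' * b' ^ k \<le> m' ^ k" by simp
  have "(m / 3) ^ (2 * k) \<le> m' ^ (2 * k)" using m by (intro power_mono) auto
  hence "m ^ (2 * k) \<le> 3 ^ (2 * k) * m' ^ (2 * k)" by (simp add: power_divide field_simps)
  moreover have "(3::real) ^ (2 * k) = 9 ^ k" by (simp add: power_mult)
  ultimately have "m ^ (2 * k) \<le> 9 ^ k * m' ^ (2 * k)" by simp
  moreover have "9 ^ k * (a' ^ k * b' ^ k) \<le> a ^ k * b ^ k"
    using a'_pow b'_pow a a' b' by (simp only: mult.assoc[symmetric]) (intro mult_mono; simp)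
  ultimately have "m ^ (2 * k) / (a ^ k * b ^ k) \<le> (9 ^ k * m' ^ (2 * k)) / (9 ^ k * (a' ^ k * b' ^ k))"
    using a' b' by (intro frac_le) auto
  thus "m ^ (2 * k) / (a ^ k * b ^ k) \<le> m' ^ (2 * k) / (a' ^ k * b' ^ k)" by simp
qed
lemma density_bounds_inherited:
  fixes a b a' b' m m' C :: real
  assumes k: "1 \<le> k" and pos: "0 < a'" "0 < b'"
    and shrink: "9 ^ k * a' \<le> a \<and> b' \<le> b \<or> a' \<le> a \<and> 9 ^ k * b' \<le> b"
    and C: "0 \<le> C" and m: "0 < m" "m / 3 \<le> m'"
    and dense: "C * a ^ k * b \<le> m ^ k" "C * a * b ^ k \<le> m ^ k"
  shows "C * a' ^ k * b' \<le> m' ^ k" "C * a' * b' ^ k \<le> m' ^ k"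
    and "m ^ (2 * k) / (a ^ k * b ^ k) \<le> m' ^ (2 * k) / (a' ^ k * b' ^ k)"
proof -
  have "C * a' ^ k * b' \<le> m' ^ k \<and> C * a' * b' ^ k \<le> m' ^ k \<and>
      m ^ (2 * k) / (a ^ k * b ^ k) \<le> m' ^ (2 * k) / (a' ^ k * b' ^ k)"
  proof (cases "9 ^ k * a' \<le> a \<and> b' \<le> b")
    case True
    thus ?thesis using density_bounds_inherited_one_side[OF k pos(1) _ pos(2) _ C m dense] by blast
  next
    case False
    hence "9 ^ k * b' \<le> b" "a' \<le> a" using shrink by auto
    moreover have "C * b ^ k * a \<le> m ^ k" "C * b * a ^ k \<le> m ^ k" using dense by (simp_all add: ac_simps)
    ultimately show ?thesis
      using density_bounds_inherited_one_side[OF k pos(2) _ pos(1) _ C m, of b a] by (simp add: ac_simps)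
  qed
  thus "C * a' ^ k * b' \<le> m' ^ k" "C * a' * b' ^ k \<le> m' ^ k"
    and "m ^ (2 * k) / (a ^ k * b ^ k) \<le> m' ^ (2 * k) / (a' ^ k * b' ^ k)" by auto
qed

lemma bounded_degree_count_arith:
  fixes a b m m' L K X :: real
  assumes a: "0 < a" and b: "0 < b" and m: "0 < m" and K: "0 < K" and L: "0 \<le> L"
    and dense: "8 * 9 ^ k * L * K ^ k * a ^ k * b \<le> m ^ k" "8 * 9 ^ k * L * K ^ k * a * b ^ k \<le> m ^ k"
    and m': "m / 3 \<le> m'"
    and X: "m' ^ (2 * k) / (2 * (a ^ k * b ^ k)) - L * (a * (K * m / a) ^ k + b * (K * m / b) ^ k) \<le> X"
  shows "m ^ (2 * k) / (4 * 9 ^ k * (a ^ k * b ^ k)) \<le> X"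
proof -
  define T where "T = m ^ (2 * k) / (9 ^ k * (a ^ k * b ^ k))"
  have ab: "a ^ k * b ^ k > 0" using a b by simp
  have "(m / 3) ^ (2 * k) \<le> m' ^ (2 * k)" using m m' by (intro power_mono) auto
  moreover have "(3::real) ^ (2 * k) = 9 ^ k" by (simp add: power_mult)
  ultimately have "m ^ (2 * k) / 9 ^ k \<le> m' ^ (2 * k)" by (simp add: power_divide)
  hence "(m ^ (2 * k) / 9 ^ k) / (2 * (a ^ k * b ^ k)) \<le> m' ^ (2 * k) / (2 * (a ^ k * b ^ k))"
    using ab by (intro divide_right_mono) simp_all
  hence half: "T / 2 \<le> m' ^ (2 * k) / (2 * (a ^ k * b ^ k))" unfolding T_def by simp
  have m2k: "m ^ (2 * k) = m ^ k * m ^ k" by (simp add: mult_2 power_add)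
  have "L * (a * (K * m / a) ^ k) = (L * K ^ k * a * b ^ k) * m ^ k / (a ^ k * b ^ k)"
    using a b by (simp add: power_divide power_mult_distrib field_simps)
  also have "\<dots> \<le> (m ^ k / (8 * 9 ^ k)) * m ^ k / (a ^ k * b ^ k)"
  proof -
    have "L * K ^ k * a * b ^ k \<le> m ^ k / (8 * 9 ^ k)" using dense(2) by (simp add: field_simps)
    thus ?thesis using ab m by (intro divide_right_mono mult_right_mono) auto
  qed
  also have "\<dots> = T / 8" unfolding T_def m2k by (simp add: field_simps)
  finally have A_part: "L * (a * (K * m / a) ^ k) \<le> T / 8" .
  have "L * (b * (K * m / b) ^ k) = (L * K ^ k * a ^ k * b) * m ^ k / (a ^ k * b ^ k)"
    using a b by (simp add: power_divide power_mult_distrib field_simps)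
  also have "\<dots> \<le> (m ^ k / (8 * 9 ^ k)) * m ^ k / (a ^ k * b ^ k)"
  proof -
    have "L * K ^ k * a ^ k * b \<le> m ^ k / (8 * 9 ^ k)" using dense(1) by (simp add: field_simps)
    thus ?thesis using ab m by (intro divide_right_mono mult_right_mono) auto
  qed
  also have "\<dots> = T / 8" unfolding T_def m2k by (simp add: field_simps)
  finally have B_part: "L * (b * (K * m / b) ^ k) \<le> T / 8" .
  have "T / 4 \<le> X" using X half A_part B_part by (simp add: distrib_left)
  thus ?thesis unfolding T_def by (simp add: field_simps)
qed

lemma dense_if_powr_bound:
  fixes a b m C :: real
  assumes k: "1 \<le> k" and b: "0 \<le> b" "b \<le> a" and C: "1 \<le> C"
    and m: "C * a * b powr (1 / real k) \<le> m"
  shows "C * a ^ k * b \<le> m ^ k" "C * a * b ^ k \<le> m ^ k"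
proof -
  have "C * a ^ k * b \<le> m ^ k"
  proof (cases "b = 0")
    case False
    hence b_pos: "b > 0" using b by simp
    have "(b powr (1 / real k)) ^ k = b"
      using b_pos k by (simp add: powr_realpow[symmetric] powr_powr)
    moreover have "(C * a * b powr (1 / real k)) ^ k \<le> m ^ k"
      using m C b by (intro power_mono) auto
    ultimately have "C ^ k * a ^ k * b \<le> m ^ k" by (simp add: power_mult_distrib)
    moreover have "C * a ^ k * b \<le> C ^ k * a ^ k * b"
      using C k b by (intro mult_right_mono) (auto simp: power_increasing[of 1 k C, simplified])
    ultimately show ?thesis by linarith
  qed (use m C b in simp)
  moreover have "a * b ^ k \<le> a ^ k * b"
  proof -
    have le: "(a * b) * b ^ (k - 1) \<le> (a * b) * a ^ (k - 1)"
      using b by (intro mult_left_mono power_mono) auto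
    have "a * b ^ k = (a * b) * b ^ (k - 1)" "a ^ k * b = (a * b) * a ^ (k - 1)"
      using k by (cases k; simp)+
    thus ?thesis using le by (simp only:)
  qed
  hence "C * a * b ^ k \<le> C * a ^ k * b" using C by (simp add: mult.assoc)
  ultimately show "C * a ^ k * b \<le> m ^ k" "C * a * b ^ k \<le> m ^ k" by linarith+
qed


text \<open>\<open>9\<^sup>k\<close> is the degree threshold of the pruning step; the factor \<open>8 \<cdot> 9\<^sup>k\<close> keeps each degenerate
  term in \<open>bounded_degree_count_arith\<close> below an eighth of the main term, which loses \<open>3\<^sup>2\<^sup>k\<close> when only
  a third of the edges is kept.\<close>
definition dense_const :: "nat \<Rightarrow> real" where
  "dense_const k = 8 * 9 ^ k * degenerate_walk_const k * (9 ^ k) ^ k"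

definition cycle_const :: "nat \<Rightarrow> real" where
  "cycle_const k = 1 / (4 * 9 ^ k * real (2 * k) ^ (2 * k))"

lemma one_le_dense_const:
  assumes "1 \<le> k"
  shows "1 \<le> dense_const k"
proof -
  have "1 \<le> degenerate_walk_const k" using assms by (rule one_le_degenerate_walk_const)
  moreover have "(1::real) \<le> 9 ^ k" by (rule one_le_power) simp
  moreover from this have "(1::real) \<le> (9 ^ k) ^ k" by (rule one_le_power)
  ultimately show ?thesis
    unfolding dense_const_def using mult_mono[of 1 _ 1] by (smt (verit) mult.assoc)
qed

lemma cycle_const_pos: "1 \<le> k \<Longrightarrow> 0 < cycle_const k"
  by (simp add: cycle_const_def)

context bipartite
begin

lemma cycle_copies_ge_if_dense_bounded_degree_subgraph:
  assumes k: "1 \<le> k" and E: "E \<noteq> {}" and E': "E' \<subseteq> E" "real (card E) / 3 \<le> real (card E')"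
    and deg_A: "\<And>x. x \<in> A \<Longrightarrow> degree E' (A \<union> B) x \<le> 9 ^ k * real (card E) / real (card A)"
    and deg_B: "\<And>y. y \<in> B \<Longrightarrow> degree E' (A \<union> B) y \<le> 9 ^ k * real (card E) / real (card B)"
    and dense: "dense_const k * real (card A) ^ k * real (card B) \<le> real (card E) ^ k"
      "dense_const k * real (card A) * real (card B) ^ k \<le> real (card E) ^ k"
  shows "cycle_const k * real (card E) ^ (2 * k) / (real (card A) ^ k * real (card B) ^ k)
    \<le> real (card (cycle_copies (2 * k) E))"
proof -
  define a b m where "a = real (card A)" and "b = real (card B)" and "m = real (card E)"
  define N where "N = real (2 * k) ^ (2 * k)"
  interpret E': bipartite A B E' by unfold_locales (rule bipartite_graph_mono[OF bipartite E'(1)])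
  have a: "0 < a" and b: "0 < b" and m: "0 < m"
    using card_A_pos card_B_pos E finite_edges by (auto simp: a_def b_def m_def card_gt_0_iff)
  hence "E' \<noteq> {}" using E'(2) unfolding m_def by auto
  from E'.cycle_copies_ge_bounded_degree[OF k \<open>E' \<noteq> {}\<close> deg_A deg_B]
  have "real (card E') ^ (2 * k) / (2 * (a ^ k * b ^ k))
      - degenerate_walk_const k * (a * (9 ^ k * m / a) ^ k + b * (9 ^ k * m / b) ^ k)
      \<le> N * real (card (cycle_copies (2 * k) E'))"
    by (simp add: a_def b_def m_def N_def)
  moreover have "8 * 9 ^ k * degenerate_walk_const k * (9 ^ k) ^ k * a ^ k * b \<le> m ^ k"
    "8 * 9 ^ k * degenerate_walk_const k * (9 ^ k) ^ k * a * b ^ k \<le> m ^ k"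
    using dense unfolding dense_const_def a_def b_def m_def by simp_all
  moreover have "0 \<le> degenerate_walk_const k" using one_le_degenerate_walk_const[OF k] by simp
  moreover have "m / 3 \<le> real (card E')" using E'(2) by (simp add: m_def)
  ultimately have "m ^ (2 * k) / (4 * 9 ^ k * (a ^ k * b ^ k)) \<le> N * real (card (cycle_copies (2 * k) E'))"
    using bounded_degree_count_arith[OF a b m, of "9 ^ k"] by simp
  moreover have "cycle_const k * m ^ (2 * k) / (a ^ k * b ^ k) = m ^ (2 * k) / (4 * 9 ^ k * (a ^ k * b ^ k)) / N"
    by (simp add: cycle_const_def N_def)
  moreover have "0 < N" using k by (simp add: N_def)
  ultimately have "cycle_const k * m ^ (2 * k) / (a ^ k * b ^ k) \<le> real (card (cycle_copies (2 * k) E'))"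
    by (simp only: pos_divide_le_eq mult.commute)
  also have "\<dots> \<le> real (card (cycle_copies (2 * k) E))"
    using card_cycle_copies_mono[OF E'(1) finite_edges] by simp
  finally show ?thesis by (simp add: a_def b_def m_def)
qed

end

lemma cycle_copies_ge_if_dense:
  assumes k: "1 \<le> k"
  shows "bipartite_graph A B E \<Longrightarrow>
    dense_const k * real (card A) ^ k * real (card B) \<le> real (card E) ^ k \<Longrightarrow>
    dense_const k * real (card A) * real (card B) ^ k \<le> real (card E) ^ k \<Longrightarrow>
    cycle_const k * real (card E) ^ (2 * k) / (real (card A) ^ k * real (card B) ^ k)
      \<le> real (card (cycle_copies (2 * k) E))"
proof (induction "card A + card B" arbitrary: A B E rule: less_induct)
  case (less A B E)
  interpret bipartite A B E by unfold_locales (rule less.prems(1))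
  show ?case
  proof (cases "E = {}")
    case True
    thus ?thesis using k by (simp add: power_0_left)
  next
    case False
    have "(1::real) < 9 ^ k" using k by (simp add: one_less_power)
    hence K: "(0::real) < 9 ^ k" by simp
    from False K show ?thesis
    proof (cases rule: high_degree_part_or_bounded_degrees)
      case (high_degree A' B' E')
      define a b m a' b' m' where "a = real (card A)" and "b = real (card B)" and "m = real (card E)"
        and "a' = real (card A')" and "b' = real (card B')" and "m' = real (card E')"
      have a': "0 < a'" and b': "0 < b'" using high_degree(3,4) by (simp_all add: a'_def b'_def)
      have m: "0 < m" "m / 3 \<le> m'" using False high_degree(6) finite_edges by (simp_all add: m_def m'_def card_gt_0_iff)
      have "9 ^ k * a' \<le> a \<and> b' = b \<or> a' = a \<and> 9 ^ k * b' \<le> b"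
        using high_degree(5) unfolding a_def b_def a'_def b'_def by auto
      moreover have "a' < 9 ^ k * a'" "b' < 9 ^ k * b'" using \<open>1 < 9 ^ k\<close> a' b' by simp_all
      ultimately have shrink: "9 ^ k * a' \<le> a \<and> b' \<le> b \<or> a' \<le> a \<and> 9 ^ k * b' \<le> b"
        and smaller: "a' < a \<and> b' = b \<or> a' = a \<and> b' < b" by auto
      note dense' = density_bounds_inherited[OF k a' b' shrink _ m less.prems(2,3)[folded a_def b_def m_def]]
      have "card A' + card B' < card A + card B"
        using smaller unfolding a_def b_def a'_def b'_def by linarith
      from less.hyps[OF this high_degree(1)] dense'(1,2) one_le_dense_const[OF k]
      have "cycle_const k * m' ^ (2 * k) / (a' ^ k * b' ^ k) \<le> real (card (cycle_copies (2 * k) E'))"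
        unfolding a'_def b'_def m'_def by simp
      moreover have "cycle_const k * m ^ (2 * k) / (a ^ k * b ^ k) \<le> cycle_const k * m' ^ (2 * k) / (a' ^ k * b' ^ k)"
        using mult_left_mono[OF dense'(3)] cycle_const_pos[OF k] one_le_dense_const[OF k] by simp
      ultimately show ?thesis
        using card_cycle_copies_mono[OF high_degree(2) finite_edges, of "2 * k"] unfolding a_def b_def m_def by linarith
    next
      case (bounded_degree E')
      then show ?thesis
        using cycle_copies_ge_if_dense_bounded_degree_subgraph[OF k False] less.prems(2,3) by blast
    qed
  qed
qed

theorem mainTheorem3:
  fixes k :: nat
  assumes "k \<ge> 2"
  shows "\<exists>c1 c2 :: real. c1 > 0 \<and> c2 > 0 \<and>
    (\<forall>(A :: nat set) (B :: nat set) (E :: nat set set).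
       bipartite_graph A B E \<longrightarrow> card A \<ge> card B \<longrightarrow>
       real (card E) \<ge> c1 * real (card A) * real (card B) powr (1 / real k) \<longrightarrow>
       real (card (cycle_copies (2 * k) E)) \<ge>
         c2 * real (card E) ^ (2 * k) / (real (card A) ^ k * real (card B) ^ k))"
proof (rule exI[of _ "dense_const k"], rule exI[of _ "cycle_const k"], intro conjI allI impI)
  have k: "1 \<le> k" using assms by simp
  show "0 < dense_const k" using one_le_dense_const[OF k] by simp
  show "0 < cycle_const k" using cycle_const_pos[OF k] .
  fix A B :: "nat set" and E :: "nat set set"
  assume bipartite: "bipartite_graph A B E" and "card B \<le> card A"
    and dense: "dense_const k * real (card A) * real (card B) powr (1 / real k) \<le> real (card E)"
  from \<open>card B \<le> card A\<close> have "real (card B) \<le> real (card A)" by simp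
  note dense_pow = dense_if_powr_bound[OF k of_nat_0_le_iff this one_le_dense_const[OF k] dense]
  show "cycle_const k * real (card E) ^ (2 * k) / (real (card A) ^ k * real (card B) ^ k)
      \<le> real (card (cycle_copies (2 * k) E))"
    by (rule cycle_copies_ge_if_dense[OF k bipartite dense_pow])
qed

end
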